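(* Let $n\in\mathbb{N}_0$ and $P_n\in M_n$ with $P_n\neq 0$. Then the polynomials $H_{s,\mu,P_n}$, $s\in\mathbb{N}_0$, form a basis of the complex vector space $R(P_n)$.
   Context: Let $d\ge 2$. $\mathbb{R}_{0,d}$ is the real Clifford algebra generated by $e_1,\dots,e_d$ with $e_ie_j+e_je_i=-2\delta_{ij}$; vectors $x$ are identified with $\sum_ix_ie_i$. $R$ is a root system with reflection group $W$, positive subsystem $R_+$, $\kappa:R\to[0,\infty)$ a $W$-invariant multiplicity function with $\gamma_\kappa=\sum_{\alpha\in R_+}\kappa(\alpha)>0$, $\mu=2\gamma_\kappa+d$. Dunkl operators $T_if(x)=\partial_{x_i}f(x)+\sum_{\alpha\in R_+}\kappa(\alpha)\frac{f(x)-f(\sigma_\alpha x)}{\langle\alpha,x\rangle}\alpha_i$; Dunkl–Dirac operator $D_h=\sum_ie_iT_i$. $M_n$: $\mathbb{C}\otimes\mathbb{R}_{0,d}$-valued homogeneous polynomials of degree $n$ with $D_hP=0$. $R(P_n)=\{\sum_{j=0}^ma_jx^jP_n(x): m\in\mathbb{N}_0,\ a_j\in\mathbb{C}\}$ (Clifford powers of $x$). $D_+f=D_hf-2xf$, and $H_{s,\mu,P_n}=(D_+)^sP_n$. *)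

theory Defs
  imports "HOL-Analysis.Analysis" "HOL-Library.Function_Algebras"
begin

text \<open>The index type 'd (finite, linearly ordered, CARD('d) = d) labels the generators e_i.
  An element of the complexified Clifford algebra is given by its coordinates with respect to
  the basis blades e_A = e_{a1} ... e_{ak} (A = {a1 < ... < ak}), i.e. a function
  'd set => complex. Addition and zero are pointwise (Function_Algebras).\<close>

type_synonym 'd cliff = "'d set \<Rightarrow> complex"

definition blade_sign :: "'d::{finite,linorder} set \<Rightarrow> 'd set \<Rightarrow> complex" where
  "blade_sign A B = (-1) ^ (card {(i, j). i \<in> A \<and> j \<in> B \<and> j < i} + card (A \<inter> B))"

text \<open>Clifford product: e_A e_B = blade_sign A B e_{A symmetric-difference B};
  this encodes e_i e_j + e_j e_i = -2 delta_ij.\<close>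
definition cmul :: "'d::{finite,linorder} cliff \<Rightarrow> 'd cliff \<Rightarrow> 'd cliff" where
  "cmul a b = (\<lambda>C. \<Sum>A\<in>UNIV. \<Sum>B\<in>UNIV.
       if (A - B) \<union> (B - A) = C then blade_sign A B * a A * b B else 0)"

definition cone :: "'d cliff" where
  "cone = (\<lambda>A. if A = {} then 1 else 0)"

definition cgen :: "'d \<Rightarrow> 'd cliff" where
  "cgen i = (\<lambda>A. if A = {i} then 1 else 0)"

definition cscale :: "complex \<Rightarrow> 'd cliff \<Rightarrow> 'd cliff" where
  "cscale c v = (\<lambda>A. c * v A)"

definition cvec :: "real ^ 'd::{finite,linorder} \<Rightarrow> 'd cliff" where
  "cvec x = (\<Sum>i\<in>UNIV. cscale (complex_of_real (x $ i)) (cgen i))"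

primrec cpow :: "'d::{finite,linorder} cliff \<Rightarrow> nat \<Rightarrow> 'd cliff" where
  "cpow a 0 = cone"
| "cpow a (Suc k) = cmul a (cpow a k)"

definition refl :: "real ^ 'd::finite \<Rightarrow> real ^ 'd \<Rightarrow> real ^ 'd" where
  "refl \<alpha> x = x - (2 * (\<alpha> \<bullet> x) / (\<alpha> \<bullet> \<alpha>)) *\<^sub>R \<alpha>"

definition root_system :: "(real ^ 'd::finite) set \<Rightarrow> bool" where
  "root_system R \<longleftrightarrow> finite R \<and> 0 \<notin> R \<and>
     (\<forall>\<alpha>\<in>R. \<forall>\<beta>\<in>R. refl \<alpha> \<beta> \<in> R) \<and>
     (\<forall>\<alpha>\<in>R. \<forall>c::real. c *\<^sub>R \<alpha> \<in> R \<longleftrightarrow> c = 1 \<or> c = -1)"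

definition positive_subsystem :: "(real ^ 'd::finite) set \<Rightarrow> (real ^ 'd) set \<Rightarrow> bool" where
  "positive_subsystem R Rp \<longleftrightarrow>
     (\<exists>\<beta>. (\<forall>\<alpha>\<in>R. \<alpha> \<bullet> \<beta> \<noteq> 0) \<and> Rp = {\<alpha>\<in>R. \<alpha> \<bullet> \<beta> > 0})"

inductive_set refl_group :: "(real ^ 'd::finite) set \<Rightarrow> (real ^ 'd \<Rightarrow> real ^ 'd) set"
  for R where
  id: "id \<in> refl_group R"
| step: "w \<in> refl_group R \<Longrightarrow> \<alpha> \<in> R \<Longrightarrow> refl \<alpha> \<circ> w \<in> refl_group R"

definition multiplicity :: "(real ^ 'd::finite) set \<Rightarrow> (real ^ 'd \<Rightarrow> real) \<Rightarrow> bool" where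
  "multiplicity R \<kappa> \<longleftrightarrow> (\<forall>\<alpha>\<in>R. \<kappa> \<alpha> \<ge> 0) \<and>
     (\<forall>w\<in>refl_group R. \<forall>\<alpha>\<in>R. \<kappa> (w \<alpha>) = \<kappa> \<alpha>)"

type_synonym 'd cfun = "real ^ 'd \<Rightarrow> 'd cliff"

definition partial :: "'d::finite \<Rightarrow> 'd cfun \<Rightarrow> 'd cfun" where
  "partial i f x = (\<lambda>A. vector_derivative (\<lambda>t. f (x + t *\<^sub>R axis i 1) A) (at 0))"

text \<open>Difference quotient (f(x) - f(sigma_alpha x)) / <alpha,x>, extended to the hyperplane
  <alpha,x> = 0 by continuity (as is implicit in the paper: for polynomials it is a polynomial).\<close>
definition dquot :: "real ^ 'd::finite \<Rightarrow> 'd cfun \<Rightarrow> 'd cfun" where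
  "dquot \<alpha> f x = (\<lambda>A. Lim (at x within {y. \<alpha> \<bullet> y \<noteq> 0})
       (\<lambda>y. (f y A - f (refl \<alpha> y) A) / complex_of_real (\<alpha> \<bullet> y)))"

definition dunkl :: "(real ^ 'd::finite) set \<Rightarrow> (real ^ 'd \<Rightarrow> real) \<Rightarrow> 'd \<Rightarrow> 'd cfun \<Rightarrow> 'd cfun" where
  "dunkl Rp \<kappa> i f x = partial i f x +
     (\<Sum>\<alpha>\<in>Rp. cscale (complex_of_real (\<kappa> \<alpha> * \<alpha> $ i)) (dquot \<alpha> f x))"

definition dunkl_dirac where
  "dunkl_dirac Rp \<kappa> f x = (\<Sum>i\<in>UNIV. cmul (cgen i) (dunkl Rp \<kappa> i f x))"

definition Dplus where
  "Dplus Rp \<kappa> f x = dunkl_dirac Rp \<kappa> f x - cscale 2 (cmul (cvec x) (f x))"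

definition Hpoly where
  "Hpoly Rp \<kappa> s P = (Dplus Rp \<kappa> ^^ s) P"

definition homog_poly :: "nat \<Rightarrow> 'd::finite cfun \<Rightarrow> bool" where
  "homog_poly n f \<longleftrightarrow> (\<exists>c :: ('d \<Rightarrow> nat) \<Rightarrow> 'd cliff.
     \<forall>x. f x = (\<Sum>m\<in>{m. sum m UNIV = n}. cscale (\<Prod>i\<in>UNIV. complex_of_real (x $ i) ^ m i) (c m)))"

definition Mspace where
  "Mspace Rp \<kappa> n = {P. homog_poly n P \<and> dunkl_dirac Rp \<kappa> P = (\<lambda>x. 0)}"

definition Rspace where
  "Rspace P = {f. \<exists>m a. \<forall>x. f x = (\<Sum>j\<le>m. cscale (a j) (cmul (cpow (cvec x) j) (P x)))}"

definition is_basis_seq :: "(nat \<Rightarrow> 'd::finite cfun) \<Rightarrow> 'd cfun set \<Rightarrow> bool" where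
  "is_basis_seq b V \<longleftrightarrow> (\<forall>s. b s \<in> V) \<and>
     (\<forall>m c. (\<forall>x. (\<Sum>s\<le>m. cscale (c s) (b s x)) = 0) \<longrightarrow> (\<forall>s\<le>m. c s = 0)) \<and>
     (\<forall>f\<in>V. \<exists>m c. \<forall>x. f x = (\<Sum>s\<le>m. cscale (c s) (b s x)))"

end

theory Submission
  imports Defs
begin

(* The heart of the argument is the commutation rule for the Dunkl-Dirac operator with
   Clifford multiplication by the vector variable x: for a polynomial f homogeneous of
   degree N,
        D_h (x f) = -(d + 2N + 2 gamma) f - x D_h f.
   Since D_h P_n = 0, induction gives D_h (x^k P_n) = b_k x^(k-1) P_n for explicit scalars b_k,
   hence D_+ (x^k P_n) = b_k x^(k-1) P_n - 2 x^(k+1) P_n.  Consequently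
        H_s = (-2)^s x^s P_n + (combination of x^j P_n, j < s),
   i.e. the H_s are obtained from the x^k P_n by a unitriangular (up to the factors (-2)^s)
   change of basis.  It remains to see that the x^k P_n are linearly independent: along a ray
   t x0 the function x^k P_n is t^(n+k) times a constant, so a vanishing combination gives a
   vanishing polynomial in t; the top coefficient is killed since x^(2k) = (-|x|^2)^k. *)

section \<open>The Clifford algebra\<close>

definition symdiff :: "'a set \<Rightarrow> 'a set \<Rightarrow> 'a set" where
  "symdiff A B = (A - B) \<union> (B - A)"

lemma symdiff_simps[simp]:
  "symdiff A (symdiff A B) = B" "symdiff (symdiff A B) B = A"
  "symdiff A {} = A" "symdiff {} A = A" "symdiff A A = {}"
  by (auto simp: symdiff_def)

lemma symdiff_comm: "symdiff A B = symdiff B A"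
  by (auto simp: symdiff_def)

lemma symdiff_eq_iff: "symdiff A B = C \<longleftrightarrow> B = symdiff A C"
  by (auto simp: symdiff_def)

text \<open>The sign contributed by moving the generator e_j past e_i (including e_i e_i = -1).\<close>
definition pair_sign :: "'d::linorder \<Rightarrow> 'd \<Rightarrow> complex" where
  "pair_sign i j = (if j \<le> i then -1 else 1)"

lemma pair_sign_sq: "pair_sign i j * pair_sign i j = 1"
  by (simp add: pair_sign_def)

text \<open>The blade sign is multiplicative in each pair of generators; this product form makes
  its behaviour under symmetric differences transparent.\<close>
lemma blade_sign_prod:
  "blade_sign (A::'d::{finite,linorder} set) B = (\<Prod>i\<in>A. \<Prod>j\<in>B. pair_sign i j)"
proof -
  let ?less = "{(i, j). i \<in> A \<and> j \<in> B \<and> j < i}"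
  let ?diag = "{(i, j). i \<in> A \<and> j \<in> B \<and> j = i}"
  let ?le = "{p \<in> A \<times> B. snd p \<le> fst p}"
  have "?diag = (\<lambda>i. (i,i)) ` (A \<inter> B)" by auto
  then have card_diag: "card ?diag = card (A \<inter> B)"
    by (simp add: card_image inj_on_def)
  have "card ?less + card ?diag = card (?less \<union> ?diag)"
    by (subst card_Un_disjoint) auto
  also have "?less \<union> ?diag = ?le" by auto
  finally have card_le: "card ?less + card (A \<inter> B) = card ?le" using card_diag by simp
  have "(\<Prod>i\<in>A. \<Prod>j\<in>B. pair_sign i j) = (\<Prod>p\<in>A \<times> B. pair_sign (fst p) (snd p))"
    by (simp add: prod.cartesian_product split_beta)
  also have "\<dots> = (\<Prod>p\<in>?le. pair_sign (fst p) (snd p))"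
    by (rule prod.mono_neutral_right) (auto simp: pair_sign_def)
  also have "\<dots> = (\<Prod>p\<in>?le. -1)"
    by (rule prod.cong) (auto simp: pair_sign_def)
  finally show ?thesis
    unfolding blade_sign_def card_le by simp
qed

lemma prod_symdiff:
  assumes "\<And>i. g i * g i = (1::complex)" "finite A" "finite A'"
  shows "prod g (symdiff A A') = prod g A * prod g A'"
proof -
  have A: "prod g A = prod g (A \<inter> A') * prod g (A - A')"
    using assms(2) by (rule prod.Int_Diff)
  have A': "prod g A' = prod g (A \<inter> A') * prod g (A' - A)"
    using assms(3) prod.Int_Diff[of A' g A] by (simp add: Int_commute)
  have sq: "prod g (A \<inter> A') * prod g (A \<inter> A') = 1"
    by (simp add: assms(1) prod.distrib[symmetric])
  have "prod g (symdiff A A') = prod g (A - A') * prod g (A' - A)"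
    unfolding symdiff_def by (rule prod.union_disjoint) (use assms in auto)
  also have "\<dots> = prod g (A - A') * prod g (A' - A) * (prod g (A \<inter> A') * prod g (A \<inter> A'))"
    by (simp add: sq)
  also have "\<dots> = prod g A * prod g A'"
    unfolding A A' by (simp only: mult_ac)
  finally show ?thesis .
qed

lemma prod_pair_sign_sq:
  "(\<Prod>j\<in>B. pair_sign i j) * (\<Prod>j\<in>B. pair_sign i j) = 1"
  "(\<Prod>i\<in>B. pair_sign i j) * (\<Prod>i\<in>B. pair_sign i j) = 1"
  by (simp_all add: prod.distrib[symmetric] pair_sign_sq)

lemma blade_sign_symdiff_left:
  "blade_sign (symdiff (A::'d::{finite,linorder} set) A') B = blade_sign A B * blade_sign A' B"
  unfolding blade_sign_prod by (rule prod_symdiff) (auto simp: prod_pair_sign_sq)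

lemma blade_sign_symdiff_right:
  "blade_sign (A::'d::{finite,linorder} set) (symdiff B B') = blade_sign A B * blade_sign A B'"
  unfolding blade_sign_prod
  by (subst prod_symdiff) (auto simp: prod_pair_sign_sq prod.distrib pair_sign_sq)

lemma blade_sign_empty[simp]: "blade_sign {} B = 1" "blade_sign A {} = 1"
  by (simp_all add: blade_sign_prod)

lemma cmul_alt: "cmul a b C = (\<Sum>A\<in>UNIV. blade_sign A (symdiff A C) * a A * b (symdiff A C))"
  unfolding cmul_def
proof (rule sum.cong[OF refl])
  fix A
  have "(\<Sum>B\<in>UNIV. if (A - B) \<union> (B - A) = C then blade_sign A B * a A * b B else 0)
      = (\<Sum>B\<in>UNIV. if B = symdiff A C then blade_sign A B * a A * b B else 0)"
    by (rule sum.cong) (auto simp: symdiff_eq_iff[symmetric] symdiff_def)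
  then show "(\<Sum>B\<in>UNIV. if (A - B) \<union> (B - A) = C then blade_sign A B * a A * b B else 0) =
      blade_sign A (symdiff A C) * a A * b (symdiff A C)"
    by (simp add: sum.delta)
qed

lemma blade_sign_cocycle:
  "blade_sign (symdiff A B) (symdiff B (symdiff A C)) * blade_sign A B =
   blade_sign A (symdiff A C) * blade_sign B (symdiff B (symdiff A C :: 'd::{finite,linorder} set))"
proof -
  let ?D = "symdiff B (symdiff A C)"
  have "symdiff ?D B = symdiff A C" by (auto simp: symdiff_def)
  then have "blade_sign A ?D * blade_sign A B = blade_sign A (symdiff A C)"
    using blade_sign_symdiff_right[of A ?D B] by simp
  then show ?thesis
    by (simp add: blade_sign_symdiff_left mult_ac)
qed

lemma cmul_assoc: "cmul (cmul a b) c = cmul a (cmul b (c::'d::{finite,linorder} cliff))"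
proof (rule ext)
  fix C :: "'d set"
  let ?s = "\<lambda>A B. blade_sign A (symdiff A C) * blade_sign B (symdiff B (symdiff A C))"
  have "cmul (cmul a b) c C = (\<Sum>A\<in>UNIV. \<Sum>X\<in>UNIV. blade_sign X (symdiff X C) *
          (blade_sign A (symdiff A X) * a A * b (symdiff A X)) * c (symdiff X C))"
    by (simp only: cmul_alt sum_distrib_left sum_distrib_right) (rule sum.swap)
  also have "\<dots> = (\<Sum>A\<in>UNIV. \<Sum>B\<in>UNIV. blade_sign (symdiff A B) (symdiff (symdiff A B) C) *
          (blade_sign A B * a A * b B) * c (symdiff (symdiff A B) C))"
  proof (rule sum.cong[OF refl])
    fix A
    show "(\<Sum>X\<in>UNIV. blade_sign X (symdiff X C) * (blade_sign A (symdiff A X) * a A * b (symdiff A X)) *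
            c (symdiff X C)) = (\<Sum>B\<in>UNIV. blade_sign (symdiff A B) (symdiff (symdiff A B) C) *
            (blade_sign A B * a A * b B) * c (symdiff (symdiff A B) C))"
      by (rule sum.reindex_bij_witness[of _ "symdiff A" "symdiff A"]) auto
  qed
  also have "\<dots> = (\<Sum>A\<in>UNIV. \<Sum>B\<in>UNIV. ?s A B * a A * b B * c (symdiff B (symdiff A C)))"
  proof (intro sum.cong refl)
    fix A B :: "'d set"
    have "symdiff (symdiff A B) C = symdiff B (symdiff A C)" by (auto simp: symdiff_def)
    then show "blade_sign (symdiff A B) (symdiff (symdiff A B) C) * (blade_sign A B * a A * b B) *
        c (symdiff (symdiff A B) C) = ?s A B * a A * b B * c (symdiff B (symdiff A C))"
      using blade_sign_cocycle[of A B C] by (simp only: mult_ac)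
  qed
  also have "\<dots> = cmul a (cmul b c) C"
    by (simp only: cmul_alt sum_distrib_left) (simp only: mult_ac)
  finally show "cmul (cmul a b) c C = cmul a (cmul b c) C" .
qed

lemma sum_fun_apply: "(\<Sum>i\<in>I. F i) x = (\<Sum>i\<in>I. F i x)"
  by (induction I rule: infinite_finite_induct) auto

lemma cscale_apply[simp]: "cscale c v A = c * v A" by (simp add: cscale_def)
lemma cscale_add: "cscale c (a + b) = cscale c a + cscale c b" by (rule ext) (simp add: algebra_simps)
lemma cscale_add_left: "cscale (c + d) a = cscale c a + cscale d a" by (rule ext) (simp add: algebra_simps)
lemma cscale_minus: "cscale c (a - b) = cscale c a - cscale c b" by (rule ext) (simp add: algebra_simps)
lemma cscale_uminus_left: "cscale (- c) a = - cscale c a" by (rule ext) simp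
lemma cscale_cscale[simp]: "cscale c (cscale d a) = cscale (c * d) a" by (rule ext) simp
lemma cscale_one[simp]: "cscale 1 a = a" by (rule ext) simp
lemma cscale_zero[simp]: "cscale 0 a = 0" "cscale c 0 = 0" by (rule ext, simp)+
lemma cscale_if: "cscale (if P then 1 else 0) v = (if P then v else 0)" by simp
lemma cscale_sum: "cscale c (\<Sum>i\<in>I. F i) = (\<Sum>i\<in>I. cscale c (F i))"
  by (rule ext) (simp add: sum_fun_apply sum_distrib_left)
lemma cscale_sum_left: "cscale (\<Sum>i\<in>I. f i) a = (\<Sum>i\<in>I. cscale (f i) a)"
  by (rule ext) (simp add: sum_fun_apply sum_distrib_right)

context
  fixes a b c :: "'d::{finite,linorder} cliff"
begin

lemma cmul_add_left: "cmul (a + b) c = cmul a c + cmul b c"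
  by (rule ext) (simp add: cmul_alt algebra_simps sum.distrib)
lemma cmul_add_right: "cmul a (b + c) = cmul a b + cmul a c"
  by (rule ext) (simp add: cmul_alt algebra_simps sum.distrib)
lemma cmul_diff_left: "cmul (a - b) c = cmul a c - cmul b c"
  by (rule ext) (simp add: cmul_alt algebra_simps sum_subtractf)
lemma cmul_scale_left: "cmul (cscale z a) c = cscale z (cmul a c)"
  by (rule ext) (simp add: cmul_alt sum_distrib_left mult_ac)
lemma cmul_scale_right: "cmul a (cscale z c) = cscale z (cmul a c)"
  by (rule ext) (simp add: cmul_alt sum_distrib_left mult_ac)
lemma cmul_zero[simp]: "cmul 0 c = 0" "cmul c 0 = 0"
  by (rule ext, simp add: cmul_alt)+

lemma cmul_one_left[simp]: "cmul cone a = a"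
proof (rule ext)
  fix C
  have "cmul cone a C = (\<Sum>X\<in>UNIV. if X = {} then blade_sign X (symdiff X C) * a (symdiff X C) else 0)"
    unfolding cmul_alt by (rule sum.cong) (auto simp: cone_def)
  then show "cmul cone a C = a C" by simp
qed

end

lemma cmul_sum_left: "cmul (\<Sum>i\<in>I. F i) c = (\<Sum>i\<in>I. cmul (F i) (c::'d::{finite,linorder} cliff))"
proof (induction I rule: infinite_finite_induct)
  case (insert x J)
  then show ?case by (simp only: sum.insert[OF insert(1,2)] cmul_add_left insert(3))
next
  case (infinite J)
  then show ?case by (simp only: sum.infinite[OF infinite] cmul_zero)
qed (simp only: sum.empty cmul_zero)

lemma cmul_sum_right: "cmul c (\<Sum>i\<in>I. F i) = (\<Sum>i\<in>I. cmul c (F i::'d::{finite,linorder} cliff))"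
proof (induction I rule: infinite_finite_induct)
  case (insert x J)
  then show ?case by (simp only: sum.insert[OF insert(1,2)] cmul_add_right insert(3))
next
  case (infinite J)
  then show ?case by (simp only: sum.infinite[OF infinite] cmul_zero)
qed (simp only: sum.empty cmul_zero)

definition blade :: "'d set \<Rightarrow> 'd cliff" where
  "blade A = (\<lambda>C. if C = A then 1 else 0)"

lemma cmul_blade:
  "cmul (blade A) (blade B) = cscale (blade_sign A B) (blade (symdiff A (B::'d::{finite,linorder} set)))"
proof (rule ext)
  fix C
  have "cmul (blade A) (blade B) C =
      (\<Sum>X\<in>UNIV. if X = A then blade_sign X (symdiff X C) * blade B (symdiff X C) else 0)"
    unfolding cmul_alt by (rule sum.cong) (auto simp: blade_def)
  then show "cmul (blade A) (blade B) C = cscale (blade_sign A B) (blade (symdiff A B)) C"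
    by (auto simp: blade_def symdiff_eq_iff)
qed

lemma cgen_anticomm:
  "cmul (cgen i) (cgen j) + cmul (cgen j) (cgen i) =
   cscale (if i = j then -2 else 0) (cone::'d::{finite,linorder} cliff)"
proof -
  have gen: "cgen k = blade {k}" for k :: 'd by (simp add: cgen_def blade_def)
  have one: "cone = (blade {} :: 'd cliff)" by (simp add: cone_def blade_def)
  have sign: "blade_sign {i} {j} = pair_sign i j" by (simp add: blade_sign_prod)
  show ?thesis
  proof (cases "i = j")
    case True
    then show ?thesis
      by (intro ext) (simp add: gen one cmul_blade blade_sign_prod pair_sign_def)
  next
    case False
    then have "pair_sign i j + pair_sign j i = 0" by (auto simp: pair_sign_def)
    then show ?thesis using False
      by (intro ext) (simp add: gen cmul_blade blade_sign_prod symdiff_comm[of "{j}"]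
          distrib_right[symmetric])
  qed
qed

lemma cgen_sq: "cmul (cgen i) (cgen i) = cscale (-1) (cone::'d::{finite,linorder} cliff)"
  using fun_cong[OF cgen_anticomm[of i i]] by (intro ext) simp

lemma cvec_mul:
  "cmul (cvec x) w = (\<Sum>j\<in>UNIV. cscale (complex_of_real (x $ j)) (cmul (cgen j) w :: 'd::{finite,linorder} cliff))"
  unfolding cvec_def cmul_sum_left cmul_scale_left ..

lemma cgen_cvec_anticomm:
  "cmul (cgen i) (cvec x) + cmul (cvec x) (cgen i) =
   cscale (- 2 * complex_of_real (x $ i)) (cone::'d::{finite,linorder} cliff)"
proof -
  have "cmul (cgen i) (cvec x) + cmul (cvec x) (cgen i) =
    (\<Sum>j\<in>UNIV. cscale (complex_of_real (x $ j)) (cmul (cgen i) (cgen j) + cmul (cgen j) (cgen i)))"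
    unfolding cvec_def cmul_sum_left cmul_sum_right cmul_scale_left cmul_scale_right
    by (simp add: sum.distrib cscale_add)
  also have "\<dots> = (\<Sum>j\<in>UNIV. if j = i then cscale (- 2 * complex_of_real (x $ i)) cone else 0)"
    by (rule sum.cong[OF refl]) (auto simp: cgen_anticomm mult.commute)
  finally show ?thesis by simp
qed

lemma cgen_cvec_commute:
  "cmul (cgen i) (cmul (cvec x) w) =
   cscale (- 2 * complex_of_real (x $ i)) w - cmul (cvec x) (cmul (cgen i) (w :: 'd::{finite,linorder} cliff))"
proof -
  have "cmul (cgen i) (cvec x) = cscale (- 2 * complex_of_real (x $ i)) cone - cmul (cvec x) (cgen i :: 'd cliff)"
    using cgen_cvec_anticomm[of i x] by (simp add: eq_diff_eq)
  then show ?thesis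
    by (simp add: cmul_assoc[symmetric] cmul_diff_left cmul_scale_left)
qed

lemma cvec_sq:
  "cmul (cvec x) (cvec x) = cscale (- complex_of_real (x \<bullet> x)) (cone::'d::{finite,linorder} cliff)"
proof -
  let ?X = "cvec x :: 'd cliff"
  have expand_left: "cmul ?X ?X = (\<Sum>i\<in>UNIV. cscale (complex_of_real (x $ i)) (cmul (cgen i) ?X))"
    by (rule cvec_mul)
  have expand_right: "cmul ?X ?X = (\<Sum>i\<in>UNIV. cscale (complex_of_real (x $ i)) (cmul ?X (cgen i)))"
    by (subst (2) cvec_def) (simp only: cmul_sum_right cmul_scale_right)
  have "cmul ?X ?X + cmul ?X ?X =
      (\<Sum>i\<in>UNIV. cscale (complex_of_real (x $ i)) (cmul (cgen i) ?X + cmul ?X (cgen i)))"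
    by (subst (1) expand_left, subst expand_right) (simp only: sum.distrib[symmetric] cscale_add)
  also have "\<dots> = (\<Sum>i\<in>UNIV. cscale (- 2 * (complex_of_real (x $ i) * complex_of_real (x $ i))) cone)"
    by (simp only: cgen_cvec_anticomm cscale_cscale mult_ac)
  also have "\<dots> = cscale (- 2 * complex_of_real (x \<bullet> x)) cone"
  proof -
    have "(\<Sum>i\<in>UNIV. - 2 * (complex_of_real (x $ i) * complex_of_real (x $ i))) = - 2 * complex_of_real (x \<bullet> x)"
      by (simp add: inner_vec_def sum_distrib_left)
    then show ?thesis by (simp only: cscale_sum_left[symmetric])
  qed
  finally have twice: "cmul ?X ?X + cmul ?X ?X = cscale (- 2 * complex_of_real (x \<bullet> x)) cone" .
  have halve: "\<And>a b c :: complex. a + a = (- 2 * c) * b \<Longrightarrow> a = (- c) * b"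
    by (simp add: algebra_simps)
  show ?thesis
  proof (rule ext)
    fix A
    have "cmul ?X ?X A + cmul ?X ?X A = (- 2 * complex_of_real (x \<bullet> x)) * cone A"
      using fun_cong[OF twice, of A] by (simp only: plus_fun_apply cscale_apply)
    then show "cmul ?X ?X A = cscale (- complex_of_real (x \<bullet> x)) cone A"
      using halve by (simp only: cscale_apply)
  qed
qed

lemma sum_cgen_cgen:
  "(\<Sum>i\<in>UNIV. cmul (cgen i) (cmul (cgen i) w)) = cscale (- of_nat CARD('d)) (w :: 'd::{finite,linorder} cliff)"
proof -
  have "(\<Sum>i\<in>UNIV. cmul (cgen i) (cmul (cgen i) w)) = (\<Sum>i\<in>(UNIV::'d set). cscale (-1) w)"
    by (simp add: cmul_assoc[symmetric] cgen_sq cmul_scale_left)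
  also have "\<dots> = cscale (- of_nat CARD('d)) w"
    by (subst cscale_sum_left[symmetric]) simp
  finally show ?thesis .
qed

lemma cpow_add: "cpow a (j + k) = cmul (cpow a j) (cpow (a::'d::{finite,linorder} cliff) k)"
  by (induction j) (simp_all add: cmul_assoc)

lemma cpow_even:
  "cpow (cvec x) (2 * m) = cscale ((- complex_of_real (x \<bullet> x)) ^ m) (cone :: 'd::{finite,linorder} cliff)"
proof (induction m)
  case 0 then show ?case by simp
next
  case (Suc m)
  have "cpow (cvec x) (2 * Suc m) = cmul (cmul (cvec x) (cvec x)) (cpow (cvec x) (2 * m))"
    by (simp add: cmul_assoc)
  then show ?case
    using Suc by (simp only: cvec_sq cmul_scale_left cmul_scale_right cmul_one_left cscale_cscale
        power_Suc mult.commute)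
qed

text \<open>Clifford powers of a nonzero vector are invertible, since x^(2m) = (-|x|^2)^m.\<close>
lemma cpow_cvec_cancel:
  assumes "x \<noteq> 0" "cmul (cpow (cvec x) m) v = (0 :: 'd::{finite,linorder} cliff)"
  shows "v = 0"
proof -
  have "cpow (cvec x) (m + m) = cscale ((- complex_of_real (x \<bullet> x)) ^ m) (cone :: 'd cliff)"
    using cpow_even[of x m] by (simp add: mult_2)
  then have "cscale ((- complex_of_real (x \<bullet> x)) ^ m) v = cmul (cpow (cvec x) (m + m)) v"
    by (simp add: cmul_scale_left)
  also have "\<dots> = 0"
    by (simp add: cpow_add cmul_assoc assms(2))
  finally have scaled: "cscale ((- complex_of_real (x \<bullet> x)) ^ m) v = 0" .
  have nonzero: "(- complex_of_real (x \<bullet> x)) ^ m \<noteq> 0" using assms(1) by simp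
  show "v = 0"
  proof (rule ext)
    fix A
    have "(- complex_of_real (x \<bullet> x)) ^ m * v A = 0"
      using fun_cong[OF scaled, of A] by simp
    then show "v A = 0 A" using nonzero assms(1) by simp
  qed
qed

lemma cvec_scale: "cvec (t *\<^sub>R y) = cscale (complex_of_real t) (cvec y :: 'd::{finite,linorder} cliff)"
  by (simp add: cvec_def cscale_sum mult.commute)

lemma cpow_scale: "cpow (cscale c a) k = cscale (c ^ k) (cpow (a::'d::{finite,linorder} cliff) k)"
  by (induction k) (simp_all only: cpow.simps cmul_scale_left cmul_scale_right cscale_cscale
      power_0 power_Suc cscale_one mult.commute)

section \<open>Polynomial functions and their calculus\<close>

inductive cpoly :: "((real, 'd::finite) vec \<Rightarrow> complex) \<Rightarrow> bool" where
  cpoly_const: "cpoly (\<lambda>y. c)"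
| cpoly_coord: "cpoly (\<lambda>y. complex_of_real (y $ k))"
| cpoly_add: "cpoly f \<Longrightarrow> cpoly g \<Longrightarrow> cpoly (\<lambda>y. f y + g y)"
| cpoly_mult: "cpoly f \<Longrightarrow> cpoly g \<Longrightarrow> cpoly (\<lambda>y. f y * g y)"

lemma cpoly_sum: "(\<And>i. i \<in> I \<Longrightarrow> cpoly (F i)) \<Longrightarrow> cpoly (\<lambda>y. \<Sum>i\<in>I. F i y)"
proof (induction I rule: infinite_finite_induct)
  case (insert x J)
  then show ?case by (simp add: cpoly_add)
qed (use cpoly_const[of 0] in simp_all)

lemma cpoly_prod: "(\<And>i. i \<in> I \<Longrightarrow> cpoly (F i)) \<Longrightarrow> cpoly (\<lambda>y. \<Prod>i\<in>I. F i y)"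
proof (induction I rule: infinite_finite_induct)
  case (insert x J)
  then show ?case by (simp add: cpoly_mult)
qed (use cpoly_const[of 1] in simp_all)

lemma cpoly_pow: "cpoly f \<Longrightarrow> cpoly (\<lambda>y. f y ^ n)"
proof (induction n)
  case 0
  then show ?case using cpoly_const[of 1] by simp
next
  case (Suc n)
  then show ?case using cpoly_mult[OF Suc(2) Suc(1)[OF Suc(2)]] by simp
qed

lemma cpoly_cmult: "cpoly f \<Longrightarrow> cpoly (\<lambda>y. c * f y)"
  using cpoly_mult[OF cpoly_const] .

lemma cpoly_has_derivative: "cpoly f \<Longrightarrow> \<exists>f'. \<forall>x. (f has_derivative f' x) (at x)"
proof (induction rule: cpoly.induct)
  case (cpoly_const c)
  then show ?case by (intro exI[of _ "\<lambda>x h. 0"]) simp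
next
  case (cpoly_coord k)
  have "bounded_linear (\<lambda>y::(real,'a) vec. complex_of_real (y $ k))"
    by (rule bounded_linear_compose[OF bounded_linear_of_real bounded_linear_vec_nth])
  then show ?case
    by (intro exI[of _ "\<lambda>x h. complex_of_real (h $ k)"]) (simp add: bounded_linear_imp_has_derivative)
next
  case (cpoly_add f g)
  then obtain f' g' where "\<forall>x. (f has_derivative f' x) (at x)" "\<forall>x. (g has_derivative g' x) (at x)"
    by blast
  then show ?case by (intro exI[of _ "\<lambda>x h. f' x h + g' x h"]) (auto intro: has_derivative_add)
next
  case (cpoly_mult f g)
  then obtain f' g' where "\<forall>x. (f has_derivative f' x) (at x)" "\<forall>x. (g has_derivative g' x) (at x)"
    by blast
  then show ?case
    by (intro exI[of _ "\<lambda>x h. f x * g' x h + f' x h * g x"]) (auto intro: has_derivative_mult)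
qed

lemma cpoly_isCont: "cpoly f \<Longrightarrow> isCont f x"
  using cpoly_has_derivative has_derivative_continuous by blast

lemma refl_isCont: "isCont (refl \<alpha>) x"
proof -
  have "refl \<alpha> = (\<lambda>x. x - (\<alpha> \<bullet> x) *\<^sub>R ((2 / (\<alpha> \<bullet> \<alpha>)) *\<^sub>R \<alpha>))"
    by (rule ext) (simp add: refl_def)
  then show ?thesis by (simp only:) (intro continuous_intros)
qed

lemma refl_nth: "refl \<alpha> y $ k = y $ k - (2 * (\<alpha> \<bullet> y) / (\<alpha> \<bullet> \<alpha>)) * \<alpha> $ k"
  by (simp add: refl_def)

text \<open>This is what makes the Dunkl
  difference quotient well behaved on the hyperplane.\<close>
lemma cpoly_refl_divisible:
  "cpoly f \<Longrightarrow> \<exists>Q. (\<forall>x. isCont Q x) \<and> (\<forall>y. f y - f (refl \<alpha> y) = complex_of_real (\<alpha> \<bullet> y) * Q y)"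
proof (induction rule: cpoly.induct)
  case (cpoly_const c)
  then show ?case by (intro exI[of _ "\<lambda>y. 0"]) simp
next
  case (cpoly_coord k)
  show ?case
  proof (intro exI[of _ "\<lambda>y. complex_of_real (2 * \<alpha> $ k / (\<alpha> \<bullet> \<alpha>))"] conjI allI)
    fix y
    show "complex_of_real (y $ k) - complex_of_real (refl \<alpha> y $ k) =
      complex_of_real (\<alpha> \<bullet> y) * complex_of_real (2 * \<alpha> $ k / (\<alpha> \<bullet> \<alpha>))"
      unfolding refl_nth of_real_mult[symmetric] of_real_diff[symmetric] by simp
  qed simp
next
  case (cpoly_add f g)
  then obtain Qf Qg where
    f: "\<forall>x. isCont Qf x" "\<forall>y. f y - f (refl \<alpha> y) = complex_of_real (\<alpha> \<bullet> y) * Qf y" and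
    g: "\<forall>x. isCont Qg x" "\<forall>y. g y - g (refl \<alpha> y) = complex_of_real (\<alpha> \<bullet> y) * Qg y"
    by blast
  show ?case
  proof (intro exI[of _ "\<lambda>y. Qf y + Qg y"] conjI allI)
    fix x show "isCont (\<lambda>y. Qf y + Qg y) x" using f g by (intro continuous_intros) auto
  next
    fix y
    have "f y + g y - (f (refl \<alpha> y) + g (refl \<alpha> y)) = (f y - f (refl \<alpha> y)) + (g y - g (refl \<alpha> y))"
      by (simp add: algebra_simps)
    also have "\<dots> = complex_of_real (\<alpha> \<bullet> y) * Qf y + complex_of_real (\<alpha> \<bullet> y) * Qg y"
      using f g by simp
    finally show "f y + g y - (f (refl \<alpha> y) + g (refl \<alpha> y)) = complex_of_real (\<alpha> \<bullet> y) * (Qf y + Qg y)"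
      by (simp add: distrib_left)
  qed
next
  case (cpoly_mult f g)
  then obtain Qf Qg where
    f: "\<forall>x. isCont Qf x" "\<forall>y. f y - f (refl \<alpha> y) = complex_of_real (\<alpha> \<bullet> y) * Qf y" and
    g: "\<forall>x. isCont Qg x" "\<forall>y. g y - g (refl \<alpha> y) = complex_of_real (\<alpha> \<bullet> y) * Qg y"
    by blast
  show ?case
  proof (intro exI[of _ "\<lambda>y. f y * Qg y + Qf y * g (refl \<alpha> y)"] conjI allI)
    fix x
    have "isCont (\<lambda>y. g (refl \<alpha> y)) x"
      using continuous_at_compose[OF refl_isCont cpoly_isCont[OF cpoly_mult(2)]] by (simp add: o_def)
    then show "isCont (\<lambda>y. f y * Qg y + Qf y * g (refl \<alpha> y)) x"
      using f g cpoly_isCont[OF cpoly_mult(1)] by (intro continuous_intros) auto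
  next
    fix y
    have "f y * g y - f (refl \<alpha> y) * g (refl \<alpha> y) =
        f y * (g y - g (refl \<alpha> y)) + (f y - f (refl \<alpha> y)) * g (refl \<alpha> y)"
      by (simp add: algebra_simps)
    also have "\<dots> = f y * (complex_of_real (\<alpha> \<bullet> y) * Qg y) + (complex_of_real (\<alpha> \<bullet> y) * Qf y) * g (refl \<alpha> y)"
      using f g by simp
    finally show "f y * g y - f (refl \<alpha> y) * g (refl \<alpha> y) =
        complex_of_real (\<alpha> \<bullet> y) * (f y * Qg y + Qf y * g (refl \<alpha> y))"
      by (simp add: algebra_simps)
  qed
qed

definition poly_cfun :: "'d::finite cfun \<Rightarrow> bool" where
  "poly_cfun F \<longleftrightarrow> (\<forall>A. cpoly (\<lambda>y. F y A))"

lemma poly_cfun_const: "poly_cfun (\<lambda>y. a)"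
  unfolding poly_cfun_def by (simp add: cpoly_const)

lemma poly_cfun_scale: "poly_cfun F \<Longrightarrow> poly_cfun (\<lambda>y. cscale c (F y))"
  unfolding poly_cfun_def by (simp add: cpoly_cmult)

lemma poly_cfun_coord: "poly_cfun G \<Longrightarrow> poly_cfun (\<lambda>y. cscale (complex_of_real (y $ j)) (G y))"
  unfolding poly_cfun_def by (simp add: cpoly_mult cpoly_coord)

lemma poly_cfun_cmul:
  "poly_cfun F \<Longrightarrow> poly_cfun G \<Longrightarrow> poly_cfun (\<lambda>y. cmul (F y) (G y :: 'd::{finite,linorder} cliff))"
  unfolding poly_cfun_def cmul_alt by (intro allI cpoly_sum cpoly_mult cpoly_cmult) auto

lemma poly_cfun_cvec: "poly_cfun (\<lambda>y. cvec y :: 'd::{finite,linorder} cliff)"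
  unfolding poly_cfun_def cvec_def sum_fun_apply cscale_apply
  by (intro allI cpoly_sum cpoly_mult cpoly_coord cpoly_const)

lemma poly_cfun_cpow: "poly_cfun (\<lambda>y. cpow (cvec y) k :: 'd::{finite,linorder} cliff)"
proof (induction k)
  case 0
  then show ?case by (simp add: poly_cfun_const)
next
  case (Suc k)
  then show ?case by (simp add: poly_cfun_cmul[OF poly_cfun_cvec])
qed

lemma poly_cfun_isCont: "poly_cfun G \<Longrightarrow> isCont (\<lambda>y. G y A) x"
  unfolding poly_cfun_def using cpoly_isCont by blast

lemma partial_has_vector_derivative:
  assumes "poly_cfun F"
  shows "((\<lambda>t. F (x + t *\<^sub>R axis i 1) A) has_vector_derivative partial i F x A) (at 0)"
proof -
  obtain f' where f': "\<forall>x. ((\<lambda>y. F y A) has_derivative f' x) (at x)"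
    using cpoly_has_derivative assms unfolding poly_cfun_def by blast
  have line: "(\<lambda>t::real. x + t *\<^sub>R axis i 1) differentiable (at 0)"
    by (rule differentiableI) (rule derivative_eq_intros | simp)+
  have "(\<lambda>y. F y A) differentiable (at ((\<lambda>t::real. x + t *\<^sub>R axis i 1) 0))"
    using f' by (auto intro: differentiableI)
  from differentiable_chain_at[OF line this]
  have "(\<lambda>t. F (x + t *\<^sub>R axis i 1) A) differentiable (at 0)" by (simp add: o_def)
  then show ?thesis unfolding partial_def vector_derivative_works by simp
qed

lemma partial_unique:
  "((\<lambda>t. F (x + t *\<^sub>R axis i 1) A) has_vector_derivative D) (at 0) \<Longrightarrow> partial i F x A = D"
  unfolding partial_def by (simp add: vector_derivative_at)

lemma partial_sum:
  assumes "\<And>k. k \<in> K \<Longrightarrow> poly_cfun (G k)"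
  shows "partial i (\<lambda>y. \<Sum>k\<in>K. G k y) x = (\<Sum>k\<in>K. partial i (G k) x)"
proof (rule ext)
  fix A
  have "((\<lambda>t. \<Sum>k\<in>K. G k (x + t *\<^sub>R axis i 1) A) has_vector_derivative
      (\<Sum>k\<in>K. partial i (G k) x A)) (at 0)"
    by (rule has_vector_derivative_sum) (rule partial_has_vector_derivative[OF assms])
  then show "partial i (\<lambda>y. \<Sum>k\<in>K. G k y) x A = (\<Sum>k\<in>K. partial i (G k) x) A"
    by (intro partial_unique) (simp add: sum_fun_apply)
qed

lemma has_vector_derivative_cmult:
  "(g has_vector_derivative g') F \<Longrightarrow> ((\<lambda>t. c * g t) has_vector_derivative c * g') F"
  for g :: "real \<Rightarrow> complex"
  by (rule bounded_linear.has_vector_derivative[OF bounded_linear_mult_right])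

lemma partial_scale:
  assumes "poly_cfun G"
  shows "partial i (\<lambda>y. cscale c (G y)) x = cscale c (partial i G x)"
  by (intro ext partial_unique)
     (simp add: has_vector_derivative_cmult partial_has_vector_derivative[OF assms])

lemma partial_cmul:
  assumes "poly_cfun G"
  shows "partial i (\<lambda>y. cmul a (G y)) x = cmul a (partial i G x :: 'd::{finite,linorder} cliff)"
proof (rule ext)
  fix C
  have "((\<lambda>t. \<Sum>X\<in>UNIV. blade_sign X (symdiff X C) * a X * G (x + t *\<^sub>R axis i 1) (symdiff X C))
      has_vector_derivative
      (\<Sum>X\<in>UNIV. blade_sign X (symdiff X C) * a X * partial i G x (symdiff X C))) (at 0)"
    by (intro has_vector_derivative_sum has_vector_derivative_cmult partial_has_vector_derivative[OF assms])
  then show "partial i (\<lambda>y. cmul a (G y)) x C = cmul a (partial i G x) C"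
    by (intro partial_unique) (simp add: cmul_alt)
qed

lemma partial_coord:
  assumes "poly_cfun G"
  shows "partial i (\<lambda>y. cscale (complex_of_real (y $ j)) (G y)) x =
    cscale (if i = j then 1 else 0) (G x) + cscale (complex_of_real (x $ j)) (partial i G x)"
proof (rule ext)
  fix A
  let ?\<delta> = "if i = j then 1 else 0 :: real"
  have coord: "((\<lambda>t. x $ j + t * ?\<delta>) has_field_derivative ?\<delta>) (at (0::real))"
    by (rule derivative_eq_intros | simp)+
  have "((\<lambda>t. complex_of_real (x $ j + t * ?\<delta>) * G (x + t *\<^sub>R axis i 1) A) has_vector_derivative
     (complex_of_real (x $ j + 0 * ?\<delta>) * partial i G x A + complex_of_real ?\<delta> * G (x + 0 *\<^sub>R axis i 1) A)) (at 0)"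
    by (rule has_vector_derivative_mult[OF has_vector_derivative_of_real[OF coord]
          partial_has_vector_derivative[OF assms]])
  then show "partial i (\<lambda>y. cscale (complex_of_real (y $ j)) (G y)) x A =
    (cscale (if i = j then 1 else 0) (G x) + cscale (complex_of_real (x $ j)) (partial i G x)) A"
    by (intro partial_unique) (auto simp: axis_def algebra_simps)
qed

lemma has_vector_derivative_along_line:
  assumes "(h has_derivative h') (at (x0 + t0 *\<^sub>R v))"
  shows "((\<lambda>t. h (x0 + t *\<^sub>R v)) has_vector_derivative h' v) (at t0)"
proof -
  have "((\<lambda>t::real. x0 + t *\<^sub>R v) has_derivative (\<lambda>t. t *\<^sub>R v)) (at t0)"
    by (rule derivative_eq_intros | simp)+
  from has_derivative_compose[OF this assms]
  have "((\<lambda>t. h (x0 + t *\<^sub>R v)) has_derivative (\<lambda>t. h' (t *\<^sub>R v))) (at t0)" .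
  moreover have "(\<lambda>t. h' (t *\<^sub>R v)) = (\<lambda>t. t *\<^sub>R h' v)"
    using has_derivative_bounded_linear[OF assms] by (simp add: linear_simps(5))
  ultimately show ?thesis unfolding has_vector_derivative_def by simp
qed

lemma euler_identity:
  assumes f: "poly_cfun f" and hom: "\<forall>t y. f (t *\<^sub>R y) = cscale (complex_of_real t ^ N) (f y)"
  shows "(\<Sum>i\<in>UNIV. cscale (complex_of_real (x $ i)) (partial i f x)) = cscale (of_nat N) (f x)"
proof (rule ext)
  fix A
  obtain h' where h': "\<forall>x. ((\<lambda>y. f y A) has_derivative h' x) (at x)"
    using cpoly_has_derivative f unfolding poly_cfun_def by blast
  have line: "((\<lambda>t. f (x0 + t *\<^sub>R v) A) has_vector_derivative h' (x0 + t0 *\<^sub>R v) v) (at t0)"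
    for x0 v t0 using h' by (intro has_vector_derivative_along_line) simp
  have partial_eq: "partial i f x A = h' x (axis i 1)" for i
    using line[of x _ 0] by (intro partial_unique) simp
  have "h' x x = h' x (\<Sum>i\<in>UNIV. (x $ i) *\<^sub>R axis i 1)"
    using basis_expansion[of x] by (simp add: scalar_mult_eq_scaleR)
  also have "\<dots> = (\<Sum>i\<in>UNIV. (x $ i) *\<^sub>R h' x (axis i 1))"
  proof -
    have "linear (h' x)"
      using has_derivative_bounded_linear[OF h'[rule_format]] bounded_linear.linear by blast
    then show ?thesis by (simp add: real_vector.linear_sum linear_cmul)
  qed
  also have "\<dots> = (\<Sum>i\<in>UNIV. complex_of_real (x $ i) * partial i f x A)"
    by (simp add: partial_eq scaleR_conv_of_real)
  finally have radial: "h' x x = (\<Sum>i\<in>UNIV. complex_of_real (x $ i) * partial i f x A)" .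
  text \<open>Along the ray t x the function is t^N f(x); differentiate at t = 1.\<close>
  have "((\<lambda>t. complex_of_real (t ^ N) * f x A) has_vector_derivative
       (complex_of_real (1 ^ N) * 0 + complex_of_real (real N) * f x A)) (at 1)"
    using DERIV_pow[of N 1]
    by (intro has_vector_derivative_mult has_vector_derivative_of_real has_vector_derivative_const) simp
  moreover have "(\<lambda>t. f (0 + t *\<^sub>R x) A) = (\<lambda>t. complex_of_real (t ^ N) * f x A)"
    using hom by (simp add: fun_eq_iff)
  ultimately have "((\<lambda>t. f (0 + t *\<^sub>R x) A) has_vector_derivative of_nat N * f x A) (at 1)" by simp
  then have "h' x x = of_nat N * f x A"
    using vector_derivative_unique_at line[of 0 x 1] by simp
  then show "(\<Sum>i\<in>UNIV. cscale (complex_of_real (x $ i)) (partial i f x)) A = cscale (of_nat N) (f x) A"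
    using radial by (simp add: sum_fun_apply)
qed

text \<open>Every point is a limit point of the complement of the hyperplane alpha^perp, so the
  limit defining dquot is taken along a proper filter.\<close>
lemma hyperplane_complement_nontrivial:
  assumes "\<alpha> \<noteq> 0"
  shows "\<not> trivial_limit (at (x::(real,'d::finite) vec) within {y. \<alpha> \<bullet> y \<noteq> 0})"
proof -
  have "\<exists>x'\<in>{y. \<alpha> \<bullet> y \<noteq> 0}. x' \<noteq> x \<and> dist x' x < e" if e: "e > 0" for e
  proof -
    have aa: "\<alpha> \<bullet> \<alpha> > 0" using assms by simp
    define t where "t = e / (2 * norm \<alpha>)"
    have t: "t > 0" using e assms by (simp add: t_def)
    have close: "x + s *\<^sub>R \<alpha> \<noteq> x \<and> dist (x + s *\<^sub>R \<alpha>) x < e" if "0 < s" "s \<le> t" for s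
    proof -
      have "dist (x + s *\<^sub>R \<alpha>) x = s * norm \<alpha>" using that by (simp add: dist_norm)
      also have "\<dots> \<le> t * norm \<alpha>" using that by (simp add: mult_right_mono)
      also have "\<dots> < e" using e assms by (simp add: t_def)
      finally show ?thesis using that assms by simp
    qed
    text \<open>The line x + s alpha meets the hyperplane at most once, so t or t/2 works.\<close>
    have "\<alpha> \<bullet> (x + t *\<^sub>R \<alpha>) \<noteq> 0 \<or> \<alpha> \<bullet> (x + (t/2) *\<^sub>R \<alpha>) \<noteq> 0"
      using mult_pos_pos[OF t aa] by (auto simp: inner_add_right)
    then show ?thesis using close[of t] close[of "t/2"] t by auto
  qed
  then show ?thesis unfolding trivial_limit_within islimpt_approachable by simp
qed

definition refl_quot :: "(real,'d::finite) vec \<Rightarrow> 'd cfun \<Rightarrow> 'd set \<Rightarrow> (real,'d) vec \<Rightarrow> complex" where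
  "refl_quot \<alpha> F A y = (F y A - F (refl \<alpha> y) A) / complex_of_real (\<alpha> \<bullet> y)"

lemma dquot_unique:
  assumes "\<alpha> \<noteq> 0" "(refl_quot \<alpha> F A \<longlongrightarrow> L) (at x within {y. \<alpha> \<bullet> y \<noteq> 0})"
  shows "dquot \<alpha> F x A = L"
  unfolding dquot_def refl_quot_def[symmetric]
  by (rule tendsto_Lim[OF hyperplane_complement_nontrivial[OF assms(1)] assms(2)])

text \<open>For a polynomial the difference quotient converges to the continuous polynomial
  quotient Q; in particular dquot is the genuine quotient (f - f o sigma_alpha)/<alpha,.>.\<close>
lemma dquot_polynomial:
  assumes "poly_cfun F" "\<alpha> \<noteq> 0"
  shows "(refl_quot \<alpha> F A \<longlongrightarrow> dquot \<alpha> F x A) (at x within {y. \<alpha> \<bullet> y \<noteq> 0})"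
    and "cscale (complex_of_real (\<alpha> \<bullet> x)) (dquot \<alpha> F x) = F x - F (refl \<alpha> x)"
proof -
  have quotient: "\<exists>Q. (\<forall>x. isCont Q x) \<and> (\<forall>y. F y A - F (refl \<alpha> y) A = complex_of_real (\<alpha> \<bullet> y) * Q y)"
    for A using cpoly_refl_divisible assms(1) unfolding poly_cfun_def by blast
  have limit: "(refl_quot \<alpha> F A \<longlongrightarrow> dquot \<alpha> F x A) (at x within {y. \<alpha> \<bullet> y \<noteq> 0}) \<and>
      complex_of_real (\<alpha> \<bullet> x) * dquot \<alpha> F x A = F x A - F (refl \<alpha> x) A" for A
  proof -
    obtain Q where Q: "\<forall>x. isCont Q x" "\<forall>y. F y A - F (refl \<alpha> y) A = complex_of_real (\<alpha> \<bullet> y) * Q y"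
      using quotient by blast
    have "eventually (\<lambda>y. refl_quot \<alpha> F A y = Q y) (at x within {y. \<alpha> \<bullet> y \<noteq> 0})"
      unfolding eventually_at_filter by (rule always_eventually) (auto simp: refl_quot_def Q(2))
    moreover have "(Q \<longlongrightarrow> Q x) (at x within {y. \<alpha> \<bullet> y \<noteq> 0})"
      using isCont_tendsto_compose[OF Q(1)[rule_format] tendsto_ident_at] by simp
    ultimately have "(refl_quot \<alpha> F A \<longlongrightarrow> Q x) (at x within {y. \<alpha> \<bullet> y \<noteq> 0})"
      using tendsto_cong by blast
    moreover from this have "dquot \<alpha> F x A = Q x" by (rule dquot_unique[OF assms(2)])
    ultimately show ?thesis using Q(2) by simp
  qed
  then show "(refl_quot \<alpha> F A \<longlongrightarrow> dquot \<alpha> F x A) (at x within {y. \<alpha> \<bullet> y \<noteq> 0})" by blast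
  show "cscale (complex_of_real (\<alpha> \<bullet> x)) (dquot \<alpha> F x) = F x - F (refl \<alpha> x)"
    using limit by (intro ext) simp
qed

lemma dquot_sum:
  assumes "\<alpha> \<noteq> 0" "\<And>k. k \<in> K \<Longrightarrow> poly_cfun (G k)"
  shows "dquot \<alpha> (\<lambda>y. \<Sum>k\<in>K. G k y) x = (\<Sum>k\<in>K. dquot \<alpha> (G k) x)"
proof (rule ext)
  fix A
  have "refl_quot \<alpha> (\<lambda>y. \<Sum>k\<in>K. G k y) A = (\<lambda>y. \<Sum>k\<in>K. refl_quot \<alpha> (G k) A y)"
    by (rule ext) (simp add: refl_quot_def sum_fun_apply sum_subtractf[symmetric] sum_divide_distrib)
  then have "dquot \<alpha> (\<lambda>y. \<Sum>k\<in>K. G k y) x A = (\<Sum>k\<in>K. dquot \<alpha> (G k) x A)"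
    by (intro dquot_unique[OF assms(1)]) (simp add: tendsto_sum dquot_polynomial(1)[OF assms(2) assms(1)])
  then show "dquot \<alpha> (\<lambda>y. \<Sum>k\<in>K. G k y) x A = (\<Sum>k\<in>K. dquot \<alpha> (G k) x) A"
    by (simp add: sum_fun_apply)
qed

lemma dquot_scale:
  assumes "\<alpha> \<noteq> 0" "poly_cfun G"
  shows "dquot \<alpha> (\<lambda>y. cscale c (G y)) x = cscale c (dquot \<alpha> G x)"
proof (rule ext)
  fix A
  have "refl_quot \<alpha> (\<lambda>y. cscale c (G y)) A = (\<lambda>y. c * refl_quot \<alpha> G A y)"
    by (rule ext) (simp add: refl_quot_def algebra_simps)
  then show "dquot \<alpha> (\<lambda>y. cscale c (G y)) x A = cscale c (dquot \<alpha> G x) A"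
    by (simp add: dquot_unique[OF assms(1)] tendsto_mult_left dquot_polynomial(1)[OF assms(2,1)])
qed

lemma dquot_cmul:
  assumes "\<alpha> \<noteq> 0" "poly_cfun G"
  shows "dquot \<alpha> (\<lambda>y. cmul a (G y)) x = cmul a (dquot \<alpha> G x :: 'd::{finite,linorder} cliff)"
proof (rule ext)
  fix C
  have "refl_quot \<alpha> (\<lambda>y. cmul a (G y)) C =
      (\<lambda>y. \<Sum>X\<in>UNIV. blade_sign X (symdiff X C) * a X * refl_quot \<alpha> G (symdiff X C) y)"
    by (rule ext)
       (simp add: refl_quot_def cmul_alt sum_subtractf[symmetric] sum_divide_distrib algebra_simps)
  then have "dquot \<alpha> (\<lambda>y. cmul a (G y)) x C =
      (\<Sum>X\<in>UNIV. blade_sign X (symdiff X C) * a X * dquot \<alpha> G x (symdiff X C))"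
    by (intro dquot_unique[OF assms(1)])
       (simp add: tendsto_sum tendsto_mult_left dquot_polynomial(1)[OF assms(2,1)])
  then show "dquot \<alpha> (\<lambda>y. cmul a (G y)) x C = cmul a (dquot \<alpha> G x) C"
    by (simp add: cmul_alt[of a "dquot \<alpha> G x"])
qed

text \<open>Twisted product rule: multiplying by the coordinate y_j produces the extra term
  2 alpha_j/|alpha|^2 G(sigma_alpha x), since (sigma_alpha y)_j = y_j - 2 <alpha,y> alpha_j/|alpha|^2.\<close>
lemma dquot_coord:
  assumes "\<alpha> \<noteq> 0" "poly_cfun G"
  shows "dquot \<alpha> (\<lambda>y. cscale (complex_of_real (y $ j)) (G y)) x =
    cscale (complex_of_real (x $ j)) (dquot \<alpha> G x) +
    cscale (complex_of_real (2 * \<alpha> $ j / (\<alpha> \<bullet> \<alpha>))) (G (refl \<alpha> x))"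
proof (rule ext)
  fix A
  let ?c = "complex_of_real (2 * \<alpha> $ j / (\<alpha> \<bullet> \<alpha>))"
  let ?F = "at x within {y. \<alpha> \<bullet> y \<noteq> 0}"
  have "eventually (\<lambda>y. refl_quot \<alpha> (\<lambda>y. cscale (complex_of_real (y $ j)) (G y)) A y =
      complex_of_real (y $ j) * refl_quot \<alpha> G A y + ?c * G (refl \<alpha> y) A) ?F"
    unfolding eventually_at_filter
  proof (rule always_eventually, intro allI impI)
    fix y assume "y \<in> {y. \<alpha> \<bullet> y \<noteq> 0}"
    then have nonzero: "complex_of_real (\<alpha> \<bullet> y) \<noteq> 0" by simp
    have reflected: "complex_of_real (refl \<alpha> y $ j) = complex_of_real (y $ j) - complex_of_real (\<alpha> \<bullet> y) * ?c"
      by (simp add: refl_nth)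
    show "refl_quot \<alpha> (\<lambda>y. cscale (complex_of_real (y $ j)) (G y)) A y =
      complex_of_real (y $ j) * refl_quot \<alpha> G A y + ?c * G (refl \<alpha> y) A"
      unfolding refl_quot_def cscale_apply reflected using nonzero by (simp add: field_simps)
  qed
  moreover have "((\<lambda>y. G (refl \<alpha> y) A) \<longlongrightarrow> G (refl \<alpha> x) A) ?F"
    using continuous_at_compose[OF refl_isCont poly_cfun_isCont[OF assms(2)]]
    by (intro isCont_tendsto_compose[OF _ tendsto_ident_at]) (simp add: o_def)
  ultimately have "(refl_quot \<alpha> (\<lambda>y. cscale (complex_of_real (y $ j)) (G y)) A \<longlongrightarrow>
     complex_of_real (x $ j) * dquot \<alpha> G x A + ?c * G (refl \<alpha> x) A) ?F"
    using tendsto_cong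
    by (fastforce intro: tendsto_intros dquot_polynomial(1)[OF assms(2,1)])
  then show "dquot \<alpha> (\<lambda>y. cscale (complex_of_real (y $ j)) (G y)) x A =
    (cscale (complex_of_real (x $ j)) (dquot \<alpha> G x) + cscale ?c (G (refl \<alpha> x))) A"
    by (simp add: dquot_unique[OF assms(1)])
qed

section \<open>Dunkl operators on polynomials\<close>

lemma dunkl_sum:
  assumes Rp: "\<forall>\<alpha>\<in>Rp. \<alpha> \<noteq> 0" and G: "\<And>k. k \<in> K \<Longrightarrow> poly_cfun (G k)"
  shows "dunkl Rp \<kappa> i (\<lambda>y. \<Sum>k\<in>K. G k y) x = (\<Sum>k\<in>K. dunkl Rp \<kappa> i (G k) x)"
proof -
  have "dunkl Rp \<kappa> i (\<lambda>y. \<Sum>k\<in>K. G k y) x =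
    (\<Sum>k\<in>K. partial i (G k) x) +
    (\<Sum>\<alpha>\<in>Rp. \<Sum>k\<in>K. cscale (complex_of_real (\<kappa> \<alpha> * \<alpha> $ i)) (dquot \<alpha> (G k) x))"
    unfolding dunkl_def
    by (intro arg_cong2[where f="(+)"] refl sum.cong)
       (simp_all add: partial_sum[OF G] dquot_sum[OF _ G] Rp cscale_sum)
  also have "\<dots> = (\<Sum>k\<in>K. dunkl Rp \<kappa> i (G k) x)"
    unfolding dunkl_def by (subst sum.swap) (simp add: sum.distrib)
  finally show ?thesis .
qed

lemma dunkl_scale:
  assumes Rp: "\<forall>\<alpha>\<in>Rp. \<alpha> \<noteq> 0" and G: "poly_cfun G"
  shows "dunkl Rp \<kappa> i (\<lambda>y. cscale c (G y)) x = cscale c (dunkl Rp \<kappa> i G x)"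
  unfolding dunkl_def partial_scale[OF G] cscale_add cscale_sum
  by (intro arg_cong2[where f="(+)"] refl sum.cong) (simp_all add: dquot_scale[OF _ G] Rp mult.commute)

lemma dunkl_dirac_linear:
  assumes Rp: "\<forall>\<alpha>\<in>Rp. \<alpha> \<noteq> 0" and G: "\<And>k. k \<in> K \<Longrightarrow> poly_cfun (G k)"
  shows "dunkl_dirac Rp \<kappa> (\<lambda>y. \<Sum>k\<in>K. cscale (a k) (G k y)) x =
    (\<Sum>k\<in>K. cscale (a k) (dunkl_dirac Rp \<kappa> (G k) x :: 'd::{finite,linorder} cliff))"
proof -
  have "dunkl_dirac Rp \<kappa> (\<lambda>y. \<Sum>k\<in>K. cscale (a k) (G k y)) x =
     (\<Sum>i\<in>UNIV. \<Sum>k\<in>K. cscale (a k) (cmul (cgen i) (dunkl Rp \<kappa> i (G k) x)))"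
    unfolding dunkl_dirac_def
    by (intro sum.cong refl)
       (simp add: dunkl_sum[OF Rp] poly_cfun_scale G dunkl_scale[OF Rp] cmul_sum_right cmul_scale_right)
  also have "\<dots> = (\<Sum>k\<in>K. cscale (a k) (dunkl_dirac Rp \<kappa> (G k) x))"
    unfolding dunkl_dirac_def cscale_sum by (rule sum.swap)
  finally show ?thesis .
qed

lemma cvec_mult_expand:
  "(\<lambda>y. cmul (cvec y) (f y)) =
   (\<lambda>y. \<Sum>j\<in>UNIV. cscale (complex_of_real (y $ j)) (cmul (cgen j) (f y) :: 'd::{finite,linorder} cliff))"
  by (rule ext) (rule cvec_mul)

lemma partial_cvec_mult:
  assumes f: "poly_cfun f"
  shows "partial i (\<lambda>y. cmul (cvec y) (f y)) x =
    cmul (cgen i) (f x) + cmul (cvec x) (partial i f x :: 'd::{finite,linorder} cliff)"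
proof -
  have gen: "\<And>j. poly_cfun (\<lambda>y. cmul (cgen j) (f y) :: 'd cliff)"
    by (rule poly_cfun_cmul[OF poly_cfun_const f])
  have "partial i (\<lambda>y. cmul (cvec y) (f y)) x =
      (\<Sum>j\<in>UNIV. cscale (if i = j then 1 else 0) (cmul (cgen j) (f x)) +
         cscale (complex_of_real (x $ j)) (cmul (cgen j) (partial i f x)))"
    unfolding cvec_mult_expand
    by (simp add: partial_sum poly_cfun_coord gen partial_coord partial_cmul f)
  also have "\<dots> = cmul (cgen i) (f x) + cmul (cvec x) (partial i f x)"
    by (simp add: sum.distrib cvec_mul cscale_if)
  finally show ?thesis .
qed

lemma dquot_cvec_mult:
  assumes f: "poly_cfun f" and \<alpha>: "\<alpha> \<noteq> 0"
  shows "dquot \<alpha> (\<lambda>y. cmul (cvec y) (f y)) x = cmul (cvec x) (dquot \<alpha> f x) +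
     cscale (complex_of_real (2 / (\<alpha> \<bullet> \<alpha>))) (cmul (cvec \<alpha>) (f (refl \<alpha> x)) :: 'd::{finite,linorder} cliff)"
proof -
  have gen: "\<And>j. poly_cfun (\<lambda>y. cmul (cgen j) (f y) :: 'd cliff)"
    by (rule poly_cfun_cmul[OF poly_cfun_const f])
  have "dquot \<alpha> (\<lambda>y. cmul (cvec y) (f y)) x =
      (\<Sum>j\<in>UNIV. cscale (complex_of_real (x $ j)) (cmul (cgen j) (dquot \<alpha> f x)) +
         cscale (complex_of_real (2 * \<alpha> $ j / (\<alpha> \<bullet> \<alpha>))) (cmul (cgen j) (f (refl \<alpha> x))))"
    unfolding cvec_mult_expand
    by (simp add: dquot_sum \<alpha> poly_cfun_coord gen dquot_coord dquot_cmul f)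
  also have "\<dots> = cmul (cvec x) (dquot \<alpha> f x) +
     cscale (complex_of_real (2 / (\<alpha> \<bullet> \<alpha>))) (cmul (cvec \<alpha>) (f (refl \<alpha> x)))"
    by (simp add: sum.distrib cvec_mul cscale_sum mult.commute)
  finally show ?thesis .
qed

lemma dunkl_cvec_mult:
  assumes Rp: "\<forall>\<alpha>\<in>Rp. \<alpha> \<noteq> 0" and f: "poly_cfun f"
  shows "dunkl Rp \<kappa> i (\<lambda>y. cmul (cvec y) (f y)) x =
    cmul (cgen i) (f x) + cmul (cvec x) (dunkl Rp \<kappa> i f x) +
    (\<Sum>\<alpha>\<in>Rp. cscale (complex_of_real (\<kappa> \<alpha> * \<alpha> $ i) * complex_of_real (2 / (\<alpha> \<bullet> \<alpha>)))
        (cmul (cvec \<alpha>) (f (refl \<alpha> x)) :: 'd::{finite,linorder} cliff))"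
proof -
  have "dunkl Rp \<kappa> i (\<lambda>y. cmul (cvec y) (f y)) x =
    (cmul (cgen i) (f x) + cmul (cvec x) (partial i f x)) +
    (\<Sum>\<alpha>\<in>Rp. cscale (complex_of_real (\<kappa> \<alpha> * \<alpha> $ i)) (cmul (cvec x) (dquot \<alpha> f x)) +
       cscale (complex_of_real (\<kappa> \<alpha> * \<alpha> $ i) * complex_of_real (2 / (\<alpha> \<bullet> \<alpha>)))
         (cmul (cvec \<alpha>) (f (refl \<alpha> x))))"
    unfolding dunkl_def partial_cvec_mult[OF f]
    by (intro arg_cong2[where f="(+)"] refl sum.cong) (simp_all add: dquot_cvec_mult[OF f] Rp cscale_add)
  also have "\<dots> = cmul (cgen i) (f x) + cmul (cvec x) (dunkl Rp \<kappa> i f x) +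
    (\<Sum>\<alpha>\<in>Rp. cscale (complex_of_real (\<kappa> \<alpha> * \<alpha> $ i) * complex_of_real (2 / (\<alpha> \<bullet> \<alpha>)))
        (cmul (cvec \<alpha>) (f (refl \<alpha> x))))"
    unfolding dunkl_def cmul_add_right cmul_sum_right cmul_scale_right sum.distrib
    by (simp only: add_ac)
  finally show ?thesis .
qed

lemma dunkl_euler:
  assumes Rp: "\<forall>\<alpha>\<in>Rp. \<alpha> \<noteq> 0" and f: "poly_cfun f"
    and hom: "\<forall>t y. f (t *\<^sub>R y) = cscale (complex_of_real t ^ N) (f y)"
  shows "(\<Sum>i\<in>UNIV. cscale (complex_of_real (x $ i)) (dunkl Rp \<kappa> i f x)) =
    cscale (of_nat N) (f x) + (\<Sum>\<alpha>\<in>Rp. cscale (complex_of_real (\<kappa> \<alpha>)) (f x - f (refl \<alpha> x)))"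
proof -
  have inner: "(\<Sum>i\<in>UNIV. complex_of_real (x $ i) * complex_of_real (\<alpha> $ i)) = complex_of_real (\<alpha> \<bullet> x)"
    for \<alpha> :: "(real, 'a) vec" by (simp add: inner_vec_def mult.commute)
  have "(\<Sum>i\<in>UNIV. \<Sum>\<alpha>\<in>Rp. cscale (complex_of_real (x $ i)) (cscale (complex_of_real (\<kappa> \<alpha> * \<alpha> $ i)) (dquot \<alpha> f x)))
      = (\<Sum>\<alpha>\<in>Rp. cscale (complex_of_real (\<kappa> \<alpha>)) (cscale (complex_of_real (\<alpha> \<bullet> x)) (dquot \<alpha> f x)))"
    by (subst sum.swap, intro sum.cong refl)
       (simp add: cscale_sum_left[symmetric] sum_distrib_left mult_ac inner[symmetric])
  also have "\<dots> = (\<Sum>\<alpha>\<in>Rp. cscale (complex_of_real (\<kappa> \<alpha>)) (f x - f (refl \<alpha> x)))"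
    using Rp by (intro sum.cong refl) (simp add: dquot_polynomial(2)[OF f])
  finally show ?thesis
    unfolding dunkl_def cscale_add sum.distrib cscale_sum euler_identity[OF f hom] by simp
qed

text \<open>The reflection terms of D_h (x f) collapse, because sum_i alpha_i e_i alpha = alpha alpha = -|alpha|^2:
  sum_i sum_alpha kappa_alpha alpha_i (2/|alpha|^2) e_i alpha w_alpha = -2 sum_alpha kappa_alpha w_alpha.\<close>
lemma sum_reflection_terms:
  assumes Rp: "\<forall>\<alpha>\<in>Rp. \<alpha> \<noteq> 0"
  shows "(\<Sum>i\<in>UNIV. \<Sum>\<alpha>\<in>Rp. cscale (complex_of_real (\<kappa> \<alpha> * \<alpha> $ i) * complex_of_real (2 / (\<alpha> \<bullet> \<alpha>)))
      (cmul (cgen i) (cmul (cvec \<alpha>) (w \<alpha>)))) =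
    (\<Sum>\<alpha>\<in>Rp. cscale (- 2 * complex_of_real (\<kappa> \<alpha>)) (w \<alpha> :: 'd::{finite,linorder} cliff))"
proof -
  let ?k = "\<lambda>\<alpha>. complex_of_real (\<kappa> \<alpha>)"
  have "(\<Sum>i\<in>UNIV. \<Sum>\<alpha>\<in>Rp. cscale (complex_of_real (\<kappa> \<alpha> * \<alpha> $ i) * complex_of_real (2 / (\<alpha> \<bullet> \<alpha>)))
      (cmul (cgen i) (cmul (cvec \<alpha>) (w \<alpha>)))) =
    (\<Sum>\<alpha>\<in>Rp. cscale (?k \<alpha> * complex_of_real (2 / (\<alpha> \<bullet> \<alpha>))) (cmul (cvec \<alpha>) (cmul (cvec \<alpha>) (w \<alpha>))))"
    by (subst sum.swap) (simp add: cscale_sum mult_ac cvec_mul)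
  also have "\<dots> = (\<Sum>\<alpha>\<in>Rp. cscale (- 2 * ?k \<alpha>) (w \<alpha>))"
  proof (rule sum.cong[OF refl])
    fix \<alpha> assume "\<alpha> \<in> Rp"
    then have "\<alpha> \<bullet> \<alpha> \<noteq> 0" using Rp by simp
    then have "?k \<alpha> * complex_of_real (2 / (\<alpha> \<bullet> \<alpha>)) * (- complex_of_real (\<alpha> \<bullet> \<alpha>)) = - 2 * ?k \<alpha>"
      by (simp add: field_simps)
    then show "cscale (?k \<alpha> * complex_of_real (2 / (\<alpha> \<bullet> \<alpha>))) (cmul (cvec \<alpha>) (cmul (cvec \<alpha>) (w \<alpha>))) =
        cscale (- 2 * ?k \<alpha>) (w \<alpha>)"
      by (simp add: cmul_assoc[symmetric] cvec_sq cmul_scale_left)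
  qed
  finally show ?thesis .
qed

lemma dunkl_dirac_cvec_mult:
  assumes Rp: "\<forall>\<alpha>\<in>Rp. \<alpha> \<noteq> 0" and f: "poly_cfun f"
    and hom: "\<forall>t y. f (t *\<^sub>R y) = cscale (complex_of_real t ^ N) (f y)"
  shows "dunkl_dirac Rp \<kappa> (\<lambda>y. cmul (cvec y) (f y)) x =
    cscale (- (of_nat CARD('d) + 2 * of_nat N + 2 * complex_of_real (\<Sum>\<alpha>\<in>Rp. \<kappa> \<alpha>))) (f x)
    - cmul (cvec x) (dunkl_dirac Rp \<kappa> f x :: 'd::{finite,linorder} cliff)"
proof -
  define T where "T i = dunkl Rp \<kappa> i f x" for i
  define k where "k \<alpha> = complex_of_real (\<kappa> \<alpha>)" for \<alpha>
  define fs where "fs \<alpha> = f (refl \<alpha> x)" for \<alpha>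
  have reflection_terms:
    "(\<Sum>i\<in>UNIV. \<Sum>\<alpha>\<in>Rp. cscale (complex_of_real (\<kappa> \<alpha> * \<alpha> $ i) * complex_of_real (2 / (\<alpha> \<bullet> \<alpha>)))
        (cmul (cgen i) (cmul (cvec \<alpha>) (fs \<alpha>)))) = (\<Sum>\<alpha>\<in>Rp. cscale (- 2 * k \<alpha>) (fs \<alpha>))"
    unfolding k_def by (rule sum_reflection_terms[OF Rp])
  have cross_terms: "(\<Sum>i\<in>UNIV. cmul (cgen i) (cmul (cvec x) (T i))) =
      cscale (- 2) (cscale (of_nat N) (f x) + (\<Sum>\<alpha>\<in>Rp. cscale (k \<alpha>) (f x - fs \<alpha>)))
      - cmul (cvec x) (dunkl_dirac Rp \<kappa> f x)"
  proof -
    have "(\<Sum>i\<in>UNIV. cmul (cgen i) (cmul (cvec x) (T i))) =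
        cscale (- 2) (\<Sum>i\<in>UNIV. cscale (complex_of_real (x $ i)) (T i)) - cmul (cvec x) (dunkl_dirac Rp \<kappa> f x)"
      by (simp add: cgen_cvec_commute sum_subtractf cmul_sum_right cscale_sum T_def dunkl_dirac_def)
    then show ?thesis
      unfolding T_def dunkl_euler[OF Rp f hom] k_def fs_def .
  qed
  have "dunkl_dirac Rp \<kappa> (\<lambda>y. cmul (cvec y) (f y)) x =
    (\<Sum>i\<in>UNIV. cmul (cgen i) (cmul (cgen i) (f x))) + (\<Sum>i\<in>UNIV. cmul (cgen i) (cmul (cvec x) (T i))) +
    (\<Sum>i\<in>UNIV. \<Sum>\<alpha>\<in>Rp. cscale (complex_of_real (\<kappa> \<alpha> * \<alpha> $ i) * complex_of_real (2 / (\<alpha> \<bullet> \<alpha>)))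
        (cmul (cgen i) (cmul (cvec \<alpha>) (fs \<alpha>))))"
    unfolding dunkl_dirac_def dunkl_cvec_mult[OF Rp f] T_def fs_def
    by (simp only: cmul_add_right cmul_sum_right cmul_scale_right sum.distrib)
  also have "\<dots> = cscale (- of_nat CARD('d)) (f x) +
     (cscale (- 2) (cscale (of_nat N) (f x) + (\<Sum>\<alpha>\<in>Rp. cscale (k \<alpha>) (f x - fs \<alpha>))) -
       cmul (cvec x) (dunkl_dirac Rp \<kappa> f x)) +
     (\<Sum>\<alpha>\<in>Rp. cscale (- 2 * k \<alpha>) (fs \<alpha>))"
    unfolding sum_cgen_cgen cross_terms reflection_terms ..
  also have "\<dots> = cscale (- (of_nat CARD('d) + 2 * of_nat N + 2 * complex_of_real (\<Sum>\<alpha>\<in>Rp. \<kappa> \<alpha>))) (f x)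
    - cmul (cvec x) (dunkl_dirac Rp \<kappa> f x)"
    by (intro ext) (simp add: sum_fun_apply k_def algebra_simps sum_subtractf sum.distrib
        sum_distrib_left sum_distrib_right sum_negf)
  finally show ?thesis .
qed

definition in_span :: "(nat \<Rightarrow> 'd::finite cfun) \<Rightarrow> nat \<Rightarrow> 'd cfun \<Rightarrow> bool" where
  "in_span b m G \<longleftrightarrow> (\<exists>a. \<forall>y. G y = (\<Sum>j<m. cscale (a j) (b j y)))"

lemma in_span_member: "j < m \<Longrightarrow> in_span b m (b j)"
  unfolding in_span_def by (intro exI[of _ "\<lambda>i. if i = j then 1 else 0"]) (simp add: cscale_if)

lemma in_span_zero: "in_span b m (\<lambda>y. 0)"
  unfolding in_span_def by (intro exI[of _ "\<lambda>j. 0"]) simp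

lemma in_span_add: "in_span b m F \<Longrightarrow> in_span b m G \<Longrightarrow> in_span b m (\<lambda>y. F y + G y)"
  unfolding in_span_def
proof (elim exE)
  fix c c' assume "\<forall>y. F y = (\<Sum>j<m. cscale (c j) (b j y))" "\<forall>y. G y = (\<Sum>j<m. cscale (c' j) (b j y))"
  then show "\<exists>a. \<forall>y. F y + G y = (\<Sum>j<m. cscale (a j) (b j y))"
    by (intro exI[of _ "\<lambda>j. c j + c' j"]) (simp add: cscale_add_left sum.distrib)
qed

lemma in_span_scale: "in_span b m G \<Longrightarrow> in_span b m (\<lambda>y. cscale c (G y))"
  unfolding in_span_def
proof (elim exE)
  fix c' assume "\<forall>y. G y = (\<Sum>j<m. cscale (c' j) (b j y))"
  then show "\<exists>a. \<forall>y. cscale c (G y) = (\<Sum>j<m. cscale (a j) (b j y))"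
    by (intro exI[of _ "\<lambda>j. c * c' j"]) (simp add: cscale_sum)
qed

lemma in_span_diff: "in_span b m F \<Longrightarrow> in_span b m G \<Longrightarrow> in_span b m (\<lambda>y. F y - G y)"
  using in_span_add[of b m F "\<lambda>y. cscale (-1) (G y)"] in_span_scale[of b m G "-1"]
  by (simp add: cscale_uminus_left)

lemma in_span_sum: "(\<And>k. k \<in> K \<Longrightarrow> in_span b m (G k)) \<Longrightarrow> in_span b m (\<lambda>y. \<Sum>k\<in>K. G k y)"
proof (induction K rule: infinite_finite_induct)
  case (infinite K)
  have "(\<lambda>y. \<Sum>k\<in>K. G k y) = (\<lambda>y. 0)" by (rule ext) (rule sum.infinite[OF infinite(1)])
  then show ?case using in_span_zero by (simp only:)
next
  case empty
  then show ?case using in_span_zero by (simp only: sum.empty)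
next
  case (insert x K)
  then show ?case
    by (simp only: sum.insert[OF insert(1,2)]) (intro in_span_add; simp)
qed

lemma in_span_mono:
  assumes "m \<le> m'" "in_span b m G"
  shows "in_span b m' G"
proof -
  obtain a where a: "\<forall>y. G y = (\<Sum>j<m. cscale (a j) (b j y))"
    using assms(2) unfolding in_span_def by blast
  have "(\<Sum>j<m'. cscale (if j < m then a j else 0) (b j y)) = (\<Sum>j<m. cscale (a j) (b j y))" for y
    by (subst sum.mono_neutral_right[of "{..<m'}" "{..<m}"]) (use assms(1) in auto)
  then show ?thesis
    unfolding in_span_def using a by (intro exI[of _ "\<lambda>j. if j < m then a j else 0"]) simp
qed

lemma in_span_extend:
  assumes "in_span b m R"
  obtains a where "a m = c" "\<forall>y. cscale c (b m y) + R y = (\<Sum>j<Suc m. cscale (a j) (b j y))"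
proof -
  obtain a where "\<forall>y. R y = (\<Sum>j<m. cscale (a j) (b j y))" using assms unfolding in_span_def by blast
  then have "\<forall>y. cscale c (b m y) + R y = (\<Sum>j<Suc m. cscale ((a(m := c)) j) (b j y))"
    by (simp add: add.commute)
  then show ?thesis using that[of "a(m := c)"] by simp
qed

definition xpow_times :: "'d::{finite,linorder} cfun \<Rightarrow> nat \<Rightarrow> 'd cfun" where
  "xpow_times P k y = cmul (cpow (cvec y) k) (P y)"

lemma xpow_times_0: "xpow_times P 0 = P"
  by (rule ext) (simp add: xpow_times_def)

lemma xpow_times_Suc: "xpow_times P (Suc k) y = cmul (cvec y) (xpow_times P k y)"
  by (simp add: xpow_times_def cmul_assoc)

lemma poly_cfun_xpow_times: "poly_cfun P \<Longrightarrow> poly_cfun (xpow_times P k)"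
  unfolding xpow_times_def[abs_def] by (intro poly_cfun_cmul poly_cfun_cpow)

lemma xpow_times_homogeneous:
  assumes "\<forall>t y. P (t *\<^sub>R y) = cscale (complex_of_real t ^ n) (P y)"
  shows "xpow_times P k (t *\<^sub>R y) = cscale (complex_of_real t ^ (n + k)) (xpow_times P k y)"
  using assms
  by (simp add: xpow_times_def cvec_scale cpow_scale cmul_scale_left cmul_scale_right power_add mult.commute)

text \<open>The scalars b_k with D_h (x^k P) = b_k x^(k-1) P for a Dunkl-monogenic P of degree n.\<close>
primrec dirac_coeff :: "complex \<Rightarrow> complex \<Rightarrow> nat \<Rightarrow> nat \<Rightarrow> complex" where
  "dirac_coeff d \<gamma> n 0 = 0"
| "dirac_coeff d \<gamma> n (Suc k) = - (d + 2 * of_nat (n + k) + 2 * \<gamma>) - dirac_coeff d \<gamma> n k"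

lemma polyfun_vanishing_on_nonzero_reals:
  fixes e :: "nat \<Rightarrow> complex"
  assumes "\<And>t::real. t \<noteq> 0 \<Longrightarrow> (\<Sum>i\<le>m. e i * complex_of_real t ^ i) = 0"
  shows "\<forall>i\<le>m. e i = 0"
proof -
  have "inj_on complex_of_real (UNIV - {0})" by (simp add: inj_on_def)
  then have "infinite (complex_of_real ` (UNIV - {0}))"
    using finite_imageD infinite_UNIV_char_0 by fastforce
  moreover have "complex_of_real ` (UNIV - {0}) \<subseteq> {z. (\<Sum>i\<le>m. e i * z ^ i) = 0}"
    using assms by auto
  ultimately have "infinite {z. (\<Sum>i\<le>m. e i * z ^ i) = 0}"
    using finite_subset by blast
  then show ?thesis using polyfun_finite_roots by blast
qed

section \<open>The H_s in terms of the x^k P\<close>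

context
  fixes Rp :: "(real, 'd::{finite,linorder}) vec set" and \<kappa> :: "(real,'d) vec \<Rightarrow> real"
    and P :: "'d cfun" and n :: nat
  assumes nonzero_roots: "\<forall>\<alpha>\<in>Rp. \<alpha> \<noteq> 0"
    and P_poly: "poly_cfun P"
    and P_homogeneous: "\<forall>t y. P (t *\<^sub>R y) = cscale (complex_of_real t ^ n) (P y)"
    and P_monogenic: "\<forall>x. dunkl_dirac Rp \<kappa> P x = 0"
begin

abbreviation b :: "nat \<Rightarrow> complex" where
  "b \<equiv> dirac_coeff (of_nat CARD('d)) (complex_of_real (\<Sum>\<alpha>\<in>Rp. \<kappa> \<alpha>)) n"

lemma dunkl_dirac_xpow_times: "dunkl_dirac Rp \<kappa> (xpow_times P k) x = cscale (b k) (xpow_times P (k - 1) x)"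
proof (induction k arbitrary: x)
  case 0
  then show ?case by (simp add: xpow_times_0 P_monogenic)
next
  case (Suc k)
  have "dunkl_dirac Rp \<kappa> (xpow_times P (Suc k)) x =
    cscale (- (of_nat CARD('d) + 2 * of_nat (n + k) + 2 * complex_of_real (\<Sum>\<alpha>\<in>Rp. \<kappa> \<alpha>))) (xpow_times P k x)
    - cmul (cvec x) (cscale (b k) (xpow_times P (k - 1) x))"
    unfolding xpow_times_Suc[abs_def] Suc[symmetric]
    by (rule dunkl_dirac_cvec_mult[OF nonzero_roots poly_cfun_xpow_times[OF P_poly]])
       (simp add: xpow_times_homogeneous[OF P_homogeneous])
  also have "\<dots> = cscale (b (Suc k)) (xpow_times P k x)"
  proof (cases k)
    case (Suc j)
    then show ?thesis
      by (intro ext) (simp add: cmul_scale_right xpow_times_Suc[symmetric] algebra_simps)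
  qed simp
  finally show ?case by simp
qed

lemma Dplus_xpow_times:
  "Dplus Rp \<kappa> (xpow_times P k) x = cscale (b k) (xpow_times P (k - 1) x) - cscale 2 (xpow_times P (Suc k) x)"
  unfolding Dplus_def dunkl_dirac_xpow_times xpow_times_Suc ..

lemma Dplus_linear:
  assumes G: "\<And>k. k \<in> K \<Longrightarrow> poly_cfun (G k)"
  shows "Dplus Rp \<kappa> (\<lambda>y. \<Sum>k\<in>K. cscale (a k) (G k y)) x = (\<Sum>k\<in>K. cscale (a k) (Dplus Rp \<kappa> (G k) x))"
proof -
  have "dunkl_dirac Rp \<kappa> (\<lambda>y. \<Sum>k\<in>K. cscale (a k) (G k y)) x =
      (\<Sum>k\<in>K. cscale (a k) (dunkl_dirac Rp \<kappa> (G k) x))"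
    by (rule dunkl_dirac_linear[OF nonzero_roots G])
  then show ?thesis
    unfolding Dplus_def
    by (simp add: cmul_sum_right cmul_scale_right cscale_sum cscale_minus sum_subtractf mult.commute)
qed

lemma Hpoly_leading:
  "\<exists>R. in_span (xpow_times P) s R \<and> Hpoly Rp \<kappa> s P = (\<lambda>y. cscale ((-2) ^ s) (xpow_times P s y) + R y)"
proof (induction s)
  case 0
  have "Hpoly Rp \<kappa> 0 P = (\<lambda>y. cscale ((-2) ^ 0) (xpow_times P 0 y) + 0)"
    by (simp add: Hpoly_def xpow_times_0)
  then show ?case using in_span_zero by blast
next
  case (Suc s)
  then obtain R where R: "in_span (xpow_times P) s R"
    and H: "Hpoly Rp \<kappa> s P = (\<lambda>y. cscale ((-2) ^ s) (xpow_times P s y) + R y)" by blast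
  obtain a where a: "a s = (-2) ^ s"
    "\<forall>y. cscale ((-2) ^ s) (xpow_times P s y) + R y = (\<Sum>j<Suc s. cscale (a j) (xpow_times P j y))"
    using in_span_extend[OF R] by blast
  have "Hpoly Rp \<kappa> (Suc s) P = Dplus Rp \<kappa> (\<lambda>y. \<Sum>j<Suc s. cscale (a j) (xpow_times P j y))"
    using H a(2) by (simp add: Hpoly_def)
  also have "\<dots> = (\<lambda>x. \<Sum>j<Suc s. cscale (a j)
      (cscale (b j) (xpow_times P (j - 1) x) - cscale 2 (xpow_times P (Suc j) x)))"
    by (rule ext) (simp only: Dplus_linear[OF poly_cfun_xpow_times[OF P_poly]] Dplus_xpow_times)
  also have "\<dots> = (\<lambda>x. cscale ((-2) ^ Suc s) (xpow_times P (Suc s) x) +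
      ((\<Sum>j<Suc s. cscale (a j * b j) (xpow_times P (j - 1) x)) -
       (\<Sum>j<s. cscale (a j * 2) (xpow_times P (Suc j) x))))"
    by (rule ext) (simp add: cscale_minus sum_subtractf a(1) algebra_simps cscale_uminus_left)
  finally have H_Suc: "Hpoly Rp \<kappa> (Suc s) P = \<dots>" .
  have "in_span (xpow_times P) (Suc s) (\<lambda>x. (\<Sum>j<Suc s. cscale (a j * b j) (xpow_times P (j - 1) x)) -
      (\<Sum>j<s. cscale (a j * 2) (xpow_times P (Suc j) x)))"
    by (intro in_span_diff in_span_sum in_span_scale in_span_member) auto
  then show ?case using H_Suc by blast
qed

lemma Hpoly_in_span: "in_span (xpow_times P) (Suc s) (Hpoly Rp \<kappa> s P)"
proof -
  obtain R where R: "in_span (xpow_times P) s R"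
    and H: "Hpoly Rp \<kappa> s P = (\<lambda>y. cscale ((-2) ^ s) (xpow_times P s y) + R y)"
    using Hpoly_leading by blast
  show ?thesis unfolding H
    by (intro in_span_add in_span_scale in_span_member in_span_mono[OF _ R]) auto
qed

lemma Hpoly_in_Rspace: "Hpoly Rp \<kappa> s P \<in> Rspace P"
  using Hpoly_in_span[of s]
  unfolding in_span_def Rspace_def xpow_times_def lessThan_Suc_atMost by blast

text \<open>Conversely every x^j P is a combination of H_0, ..., H_j (the triangular matrix is
  invertible since its diagonal entries (-2)^j are nonzero).\<close>
lemma xpow_times_in_span_Hpoly: "in_span (\<lambda>s. Hpoly Rp \<kappa> s P) (Suc j) (xpow_times P j)"
proof (induction j rule: less_induct)
  case (less j)
  obtain R where R: "in_span (xpow_times P) j R"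
    and H: "Hpoly Rp \<kappa> j P = (\<lambda>y. cscale ((-2) ^ j) (xpow_times P j y) + R y)"
    using Hpoly_leading by blast
  obtain a where a: "\<forall>y. R y = (\<Sum>i<j. cscale (a i) (xpow_times P i y))"
    using R unfolding in_span_def by blast
  have "in_span (\<lambda>s. Hpoly Rp \<kappa> s P) (Suc j) (\<lambda>y. \<Sum>i<j. cscale (a i) (xpow_times P i y))"
    by (intro in_span_sum in_span_scale in_span_mono[OF _ less.IH]) auto
  moreover have "R = (\<lambda>y. \<Sum>i<j. cscale (a i) (xpow_times P i y))"
    using a by (simp add: fun_eq_iff)
  ultimately have "in_span (\<lambda>s. Hpoly Rp \<kappa> s P) (Suc j)
      (\<lambda>y. cscale (1 / (-2) ^ j) (Hpoly Rp \<kappa> j P y - R y))"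
    by (intro in_span_scale in_span_diff in_span_member) simp_all
  moreover have "xpow_times P j = (\<lambda>y. cscale (1 / (-2) ^ j) (Hpoly Rp \<kappa> j P y - R y))"
    unfolding H by (rule ext) simp
  ultimately show ?case by (simp only:)
qed

lemma Rspace_in_span_Hpoly:
  assumes "F \<in> Rspace P"
  obtains m where "in_span (\<lambda>s. Hpoly Rp \<kappa> s P) (Suc m) F"
proof -
  obtain m a where a: "\<forall>x. F x = (\<Sum>j\<le>m. cscale (a j) (cmul (cpow (cvec x) j) (P x)))"
    using assms unfolding Rspace_def by blast
  have "in_span (\<lambda>s. Hpoly Rp \<kappa> s P) (Suc m) (\<lambda>x. \<Sum>j\<le>m. cscale (a j) (xpow_times P j x))"
    by (intro in_span_sum in_span_scale in_span_mono[OF _ xpow_times_in_span_Hpoly]) auto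
  moreover have "F = (\<lambda>x. \<Sum>j\<le>m. cscale (a j) (xpow_times P j x))"
    using a by (simp add: fun_eq_iff xpow_times_def)
  ultimately show ?thesis using that by simp
qed

text \<open>The functions x^k P are linearly independent, in the form: a combination whose top
  term is beta x^m P can only vanish if beta = 0.  Restricting to a ray t x0 with
  P(x0) nonzero turns the combination into t^n times a polynomial in t.\<close>
lemma xpow_times_top_coeff_zero:
  assumes x0: "x0 \<noteq> 0" "P x0 \<noteq> 0"
    and G: "in_span (xpow_times P) m G"
    and vanish: "\<forall>x. cscale \<beta> (xpow_times P m x) + G x = 0"
  shows "\<beta> = 0"
proof (rule ccontr)
  assume \<beta>: "\<beta> \<noteq> 0"
  obtain a where a: "\<forall>y. G y = (\<Sum>j<m. cscale (a j) (xpow_times P j y))"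
    using G unfolding in_span_def by blast
  define v where "v j = xpow_times P j x0" for j
  have "\<beta> * v m A = 0" for A
  proof -
    define e where "e i = (if i = m then \<beta> * v m A else a i * v i A)" for i
    have "(\<Sum>i\<le>m. e i * complex_of_real t ^ i) = 0" if t: "t \<noteq> 0" for t
    proof -
      let ?z = "complex_of_real t"
      have "(\<Sum>i\<le>m. e i * ?z ^ i) = (\<Sum>i<m. a i * v i A * ?z ^ i) + \<beta> * v m A * ?z ^ m"
        by (simp add: lessThan_Suc_atMost[symmetric] e_def)
      moreover have "0 = ?z ^ n * ((\<Sum>i<m. a i * v i A * ?z ^ i) + \<beta> * v m A * ?z ^ m)"
        using fun_cong[OF vanish[rule_format, of "t *\<^sub>R x0"], of A]
        by (simp add: a v_def xpow_times_homogeneous[OF P_homogeneous] sum_fun_apply power_add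
            algebra_simps sum_distrib_left)
      ultimately show ?thesis using t by simp
    qed
    then have "e m = 0" using polyfun_vanishing_on_nonzero_reals by blast
    then show ?thesis by (simp add: e_def)
  qed
  then have "xpow_times P m x0 = 0"
    using \<beta> by (intro ext) (simp add: v_def)
  then have "P x0 = 0"
    using cpow_cvec_cancel[OF x0(1)] by (simp add: xpow_times_def)
  with x0(2) show False by simp
qed

text \<open>Linear independence of the H_s, by peeling off the top term using triangularity.\<close>
lemma Hpoly_independent:
  assumes x0: "x0 \<noteq> 0" "P x0 \<noteq> 0"
  shows "(\<forall>x. (\<Sum>s\<le>m. cscale (c s) (Hpoly Rp \<kappa> s P x)) = 0) \<Longrightarrow> \<forall>s\<le>m. c s = 0"
proof (induction m)
  case 0
  obtain R where R: "in_span (xpow_times P) 0 R"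
    and H: "Hpoly Rp \<kappa> 0 P = (\<lambda>y. cscale ((-2) ^ 0) (xpow_times P 0 y) + R y)"
    using Hpoly_leading by blast
  have "\<forall>x. cscale (c 0) (Hpoly Rp \<kappa> 0 P x) = 0"
    using "0" by (simp add: func_zero del: cscale_apply)
  then have "\<forall>x. cscale (c 0) (xpow_times P 0 x) + cscale (c 0) (R x) = 0"
    by (simp only: H power_0 cscale_one cscale_add simp_thms)
  then have "c 0 = 0" by (rule xpow_times_top_coeff_zero[OF x0 in_span_scale[OF R]])
  then show ?case by simp
next
  case (Suc m)
  obtain R where R: "in_span (xpow_times P) (Suc m) R"
    and H: "Hpoly Rp \<kappa> (Suc m) P = (\<lambda>y. cscale ((-2) ^ Suc m) (xpow_times P (Suc m) y) + R y)"
    using Hpoly_leading by blast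
  let ?G = "\<lambda>x. cscale (c (Suc m)) (R x) + (\<Sum>s<Suc m. cscale (c s) (Hpoly Rp \<kappa> s P x))"
  have G: "in_span (xpow_times P) (Suc m) ?G"
    by (intro in_span_add in_span_scale R in_span_sum
        in_span_mono[OF _ Hpoly_in_span]) auto
  have split: "(\<Sum>s\<le>Suc m. cscale (c s) (Hpoly Rp \<kappa> s P x)) =
      cscale (c (Suc m) * (-2) ^ Suc m) (xpow_times P (Suc m) x) + ?G x" for x
    by (simp add: lessThan_Suc_atMost[symmetric] H cscale_add add_ac)
  have "c (Suc m) * (-2) ^ Suc m = 0"
  proof (rule xpow_times_top_coeff_zero[OF x0 G], rule allI)
    fix x
    show "cscale (c (Suc m) * (-2) ^ Suc m) (xpow_times P (Suc m) x) + ?G x = 0"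
      using Suc.prems[rule_format, of x] unfolding split .
  qed
  then have top: "c (Suc m) = 0" by simp
  have "\<forall>x. (\<Sum>s\<le>m. cscale (c s) (Hpoly Rp \<kappa> s P x)) = 0"
    using Suc.prems unfolding sum.atMost_Suc top cscale_zero add_0_right .
  then have "\<forall>s\<le>m. c s = 0" by (rule Suc.IH)
  then show ?case using top le_Suc_eq by auto
qed

end

lemma homog_poly_poly_cfun:
  fixes P :: "'d::finite cfun"
  assumes "homog_poly n P"
  shows "poly_cfun P"
proof -
  obtain c :: "('d \<Rightarrow> nat) \<Rightarrow> 'd cliff" where
    c: "\<forall>x. P x = (\<Sum>m\<in>{m. sum m UNIV = n}. cscale (\<Prod>i\<in>UNIV. complex_of_real (x $ i) ^ m i) (c m))"
    using assms unfolding homog_poly_def by blast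
  have "(\<lambda>x. P x A) =
      (\<lambda>x. \<Sum>m\<in>{m. sum m UNIV = n}. (\<Prod>i\<in>UNIV. complex_of_real (x $ i) ^ m i) * c m A)" for A
    using c by (simp add: fun_eq_iff sum_fun_apply)
  then show ?thesis
    unfolding poly_cfun_def by (auto intro!: cpoly_sum cpoly_mult cpoly_prod cpoly_pow cpoly_coord cpoly_const)
qed

lemma homog_poly_homogeneous:
  fixes P :: "'d::finite cfun"
  assumes "homog_poly n P"
  shows "\<forall>t y. P (t *\<^sub>R y) = cscale (complex_of_real t ^ n) (P y)"
proof (intro allI)
  fix t :: real and y :: "(real, 'd) vec"
  obtain c :: "('d \<Rightarrow> nat) \<Rightarrow> 'd cliff" where
    c: "\<forall>x. P x = (\<Sum>m\<in>{m. sum m UNIV = n}. cscale (\<Prod>i\<in>UNIV. complex_of_real (x $ i) ^ m i) (c m))"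
    using assms unfolding homog_poly_def by blast
  have monomial: "(\<Prod>i\<in>UNIV. complex_of_real ((t *\<^sub>R y) $ i) ^ m i) =
      complex_of_real t ^ n * (\<Prod>i\<in>UNIV. complex_of_real (y $ i) ^ m i)"
    if "m \<in> {m. sum m UNIV = n}" for m
  proof -
    have "(\<Prod>i\<in>UNIV. complex_of_real ((t *\<^sub>R y) $ i) ^ m i) =
        complex_of_real t ^ (\<Sum>i\<in>UNIV. m i) * (\<Prod>i\<in>UNIV. complex_of_real (y $ i) ^ m i)"
      by (simp add: power_mult_distrib prod.distrib power_sum)
    then show ?thesis using that by simp
  qed
  have "P (t *\<^sub>R y) = (\<Sum>m\<in>{m. sum m UNIV = n}.
      cscale (complex_of_real t ^ n) (cscale (\<Prod>i\<in>UNIV. complex_of_real (y $ i) ^ m i) (c m)))"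
    using c by (simp only: monomial cscale_cscale cong: sum.cong)
  also have "\<dots> = cscale (complex_of_real t ^ n) (P y)"
    using c by (simp add: cscale_sum)
  finally show "P (t *\<^sub>R y) = cscale (complex_of_real t ^ n) (P y)" .
qed

text \<open>A nonzero homogeneous function is nonzero at some nonzero point: if it vanishes away from
  the origin, then n > 0 forces P(0) = 0 too, while n = 0 makes P constant.\<close>
lemma homogeneous_nonzero_point:
  assumes hom: "\<forall>t y. P (t *\<^sub>R y) = cscale (complex_of_real t ^ n) (P y)"
    and nonzero: "P \<noteq> (\<lambda>x. 0)"
  obtains x0 :: "(real, 'd::finite) vec" where "x0 \<noteq> 0" "P x0 \<noteq> 0"
proof -
  obtain x1 where x1: "P x1 \<noteq> 0" using nonzero by auto
  show ?thesis
  proof (cases "x1 = 0")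
    case False
    then show ?thesis using that x1 by blast
  next
    case True
    have "n = 0"
    proof (rule ccontr)
      assume "n \<noteq> 0"
      then have "P (0 *\<^sub>R x1) = 0" using hom[rule_format, of 0 x1] by (simp add: power_0_left)
      then show False using x1 True by simp
    qed
    then have "P (axis undefined 1) = P x1"
      using hom[rule_format, of 0 "axis undefined 1"] True by simp
    then show ?thesis using that[of "axis undefined 1"] x1 by (simp add: axis_eq_0_iff)
  qed
qed

theorem corollary3p1:
  fixes R Rp :: "((real, 'd::{finite,linorder}) vec) set"
    and \<kappa> :: "(real, 'd) vec \<Rightarrow> real"
    and n :: nat
    and P :: "(real, 'd) vec \<Rightarrow> 'd set \<Rightarrow> complex"
  assumes "card (UNIV :: 'd set) \<ge> 2"
    and "root_system R"
    and "positive_subsystem R Rp"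
    and "multiplicity R \<kappa>"
    and "(\<Sum>\<alpha>\<in>Rp. \<kappa> \<alpha>) > 0"
    and "P \<in> Mspace Rp \<kappa> n"
    and "P \<noteq> (\<lambda>x. 0)"
  shows "is_basis_seq (\<lambda>s. Hpoly Rp \<kappa> s P) (Rspace P)"
proof -
  have roots: "\<forall>\<alpha>\<in>Rp. \<alpha> \<noteq> 0"
    using assms(2,3) by (auto simp: root_system_def positive_subsystem_def)
  have homog: "homog_poly n P" and monogenic: "\<forall>x. dunkl_dirac Rp \<kappa> P x = 0"
    using assms(6) by (auto simp: Mspace_def)
  note P_facts = roots homog_poly_poly_cfun[OF homog] homog_poly_homogeneous[OF homog] monogenic
  obtain x0 where x0: "x0 \<noteq> 0" "P x0 \<noteq> 0"
    using homogeneous_nonzero_point[OF homog_poly_homogeneous[OF homog] assms(7)] by blast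
  have spanning: "\<exists>m c. \<forall>x. f x = (\<Sum>s\<le>m. cscale (c s) (Hpoly Rp \<kappa> s P x))" if "f \<in> Rspace P" for f
    using Rspace_in_span_Hpoly[OF P_facts that]
    unfolding in_span_def lessThan_Suc_atMost by blast
  show ?thesis
    unfolding is_basis_seq_def
    using Hpoly_in_Rspace[OF P_facts] Hpoly_independent[OF P_facts x0] spanning by blast
qed

end
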